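(* Let $m,n,p,r$ be positive integers, let $\mathcal{A}:\mathbb{C}^{m\times n}\to\mathbb{C}^p$ be a linear operator with $\delta_{4r}(\mathcal{A})\le 0.04$, let $X_0\in\mathbb{C}^{m\times n}$ and $\nu\in\mathbb{C}^p$ be arbitrary, and let $b=\mathcal{A}X_0+\nu$. Let $(\widehat{X}_k)_{k\ge 0}$ be any sequence of estimates produced by ADMiRA with input $(\mathcal{A},b,r)$. Then for every $k\ge 0$, $$\|X_0-\widehat{X}_{k+1}\|_F\le 0.5\,\|X_0-\widehat{X}_k\|_F+8\epsilon,$$ and consequently $$\|X_0-\widehat{X}_k\|_F\le 2^{-k}\|X_0\|_F+16\epsilon\quad\text{for all }k\ge 0,$$ where $\epsilon=\|X_0-X_{0,r}\|_F+\frac{1}{\sqrt r}\|X_0-X_{0,r}\|_*+\|\nu\|_2$ and $X_{0,r}$ is a best rank-$r$ approximation of $X_0$ in Frobenius norm.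
   Context: $\mathbb{C}^p$ has inner product $\langle x,y\rangle=y^Hx$ and norm $\|\cdot\|_2$; $\mathbb{C}^{m\times n}$ has inner product $\langle X,Y\rangle=\mathrm{tr}(Y^HX)$ and Frobenius norm $\|\cdot\|_F$; $\|\cdot\|_*$ is the nuclear norm (sum of singular values); $\mathcal{A}^*$ is the adjoint of $\mathcal{A}$ with respect to these inner products. For $s\ge1$, the rank-restricted isometry constant $\delta_s(\mathcal{A})$ is the smallest $\delta\ge0$ such that $(1-\delta)\|X\|_F^2\le\|\mathcal{A}X\|_2^2\le(1+\delta)\|X\|_F^2$ for all $X$ with $\mathrm{rank}(X)\le s$. The set of atoms $\mathbb{O}$ is a set of rank-one matrices in $\mathbb{C}^{m\times n}$ of unit Frobenius norm such that every nonzero rank-one matrix is a scalar multiple of exactly one element of $\mathbb{O}$. For $\Psi\subset\mathbb{O}$, $\mathcal{P}_\Psi$ denotes the orthogonal projection of $\mathbb{C}^{m\times n}$ onto $\mathrm{span}(\Psi)$. ADMiRA with input $(\mathcal{A},b,r)$: set $\widehat{X}_0=0$, $\widehat{\Psi}_0=\emptyset$; for $k=0,1,2,\dots$: (1) choose $\Psi'_{k+1}$ maximizing $\|\mathcal{P}_\Psi\mathcal{A}^*(b-\mathcal{A}\widehat{X}_k)\|_F$ over $\Psi\subset\mathbb{O}$ with $|\Psi|\le 2r$; (2) $\widetilde{\Psi}_{k+1}=\Psi'_{k+1}\cup\widehat{\Psi}_k$; (3) $\widetilde{X}_{k+1}$ minimizes $\|b-\mathcal{A}X\|_2$ over $X\in\mathrm{span}(\widetilde{\Psi}_{k+1})$;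 (4) choose $\widehat{\Psi}_{k+1}$ maximizing $\|\mathcal{P}_\Psi\widetilde{X}_{k+1}\|_F$ over $\Psi\subset\mathbb{O}$ with $|\Psi|\le r$; (5) $\widehat{X}_{k+1}=\mathcal{P}_{\widehat{\Psi}_{k+1}}\widetilde{X}_{k+1}$. $\widehat{X}_k$ is called the estimate in the $k$-th iteration. *)

theory Defs
  imports "HOL-Analysis.Analysis"
begin

text \<open>Matrices in C^(m x n) are modelled as complex^'n^'m (index types 'm, 'n finite),
vectors in C^p as complex^'p. The library norm on these types is the Frobenius norm
resp. the Euclidean 2-norm.\<close>

type_synonym ('m, 'n) cmat = "complex^'n^'m"

definition cinner_vec :: "complex^'p::finite \<Rightarrow> complex^'p \<Rightarrow> complex" where
  "cinner_vec x y = (\<Sum>i\<in>UNIV. x$i * cnj (y$i))"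

definition cinner_mat :: "('m::finite,'n::finite) cmat \<Rightarrow> ('m,'n) cmat \<Rightarrow> complex" where
  "cinner_mat X Y = (\<Sum>i\<in>UNIV. \<Sum>j\<in>UNIV. X$i$j * cnj (Y$i$j))"

definition smat :: "complex \<Rightarrow> ('m::finite,'n::finite) cmat \<Rightarrow> ('m,'n) cmat" where
  "smat c X = (\<chi> i j. c * X$i$j)"

definition svec :: "complex \<Rightarrow> complex^'p::finite \<Rightarrow> complex^'p" where
  "svec c x = (\<chi> i. c * x$i)"

definition clinear_op :: "(('m::finite,'n::finite) cmat \<Rightarrow> complex^'p::finite) \<Rightarrow> bool" where
  "clinear_op A \<longleftrightarrow> (\<forall>X Y. A (X + Y) = A X + A Y) \<and> (\<forall>c X. A (smat c X) = svec c (A X))"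

definition adjoint_op :: "(('m::finite,'n::finite) cmat \<Rightarrow> complex^'p::finite) \<Rightarrow> complex^'p \<Rightarrow> ('m,'n) cmat" where
  "adjoint_op A y = (THE Z. \<forall>X. cinner_vec (A X) y = cinner_mat X Z)"

definition rip_const :: "(('m::finite,'n::finite) cmat \<Rightarrow> complex^'p::finite) \<Rightarrow> nat \<Rightarrow> real" where
  "rip_const A s = Inf {\<delta>. \<delta> \<ge> 0 \<and> (\<forall>X. rank X \<le> s \<longrightarrow>
      (1 - \<delta>) * (norm X)^2 \<le> (norm (A X))^2 \<and> (norm (A X))^2 \<le> (1 + \<delta>) * (norm X)^2)}"

definition outer :: "complex^'m::finite \<Rightarrow> complex^'n::finite \<Rightarrow> ('m,'n) cmat" where
  "outer u v = (\<chi> i j. u$i * cnj (v$j))"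

definition svd_decomp :: "('m::finite,'n::finite) cmat \<Rightarrow> nat \<Rightarrow> (nat \<Rightarrow> real)
    \<Rightarrow> (nat \<Rightarrow> complex^'m) \<Rightarrow> (nat \<Rightarrow> complex^'n) \<Rightarrow> bool" where
  "svd_decomp X K \<sigma> u v \<longleftrightarrow>
     (\<forall>k<K. \<sigma> k > 0) \<and>
     (\<forall>i<K. \<forall>j<K. cinner_vec (u i) (u j) = (if i = j then 1 else 0)) \<and>
     (\<forall>i<K. \<forall>j<K. cinner_vec (v i) (v j) = (if i = j then 1 else 0)) \<and>
     X = (\<Sum>k<K. smat (complex_of_real (\<sigma> k)) (outer (u k) (v k)))"

definition nuclear_norm :: "('m::finite,'n::finite) cmat \<Rightarrow> real" where
  "nuclear_norm X = (THE s. \<exists>K \<sigma> u v. svd_decomp X K \<sigma> u v \<and> s = (\<Sum>k<K. \<sigma> k))"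

definition atom_set :: "('m::finite,'n::finite) cmat set \<Rightarrow> bool" where
  "atom_set Ats \<longleftrightarrow> (\<forall>\<psi>\<in>Ats. rank \<psi> = 1 \<and> norm \<psi> = 1) \<and>
     (\<forall>X. rank X = 1 \<longrightarrow> (\<exists>!\<psi>. \<psi> \<in> Ats \<and> (\<exists>c. X = smat c \<psi>)))"

definition mspan :: "('m::finite,'n::finite) cmat set \<Rightarrow> ('m,'n) cmat set" where
  "mspan S = {X. \<exists>F c. finite F \<and> F \<subseteq> S \<and> X = (\<Sum>\<psi>\<in>F. smat (c \<psi>) \<psi>)}"

definition proj :: "('m::finite,'n::finite) cmat set \<Rightarrow> ('m,'n) cmat \<Rightarrow> ('m,'n) cmat" where
  "proj \<Psi> X = (THE Y. Y \<in> mspan \<Psi> \<and> (\<forall>Z\<in>mspan \<Psi>. cinner_mat (X - Y) Z = 0))"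

definition best_atoms :: "('m::finite,'n::finite) cmat set \<Rightarrow> nat \<Rightarrow> ('m,'n) cmat \<Rightarrow> ('m,'n) cmat set \<Rightarrow> bool" where
  "best_atoms Ats s R \<Psi> \<longleftrightarrow> \<Psi> \<subseteq> Ats \<and> finite \<Psi> \<and> card \<Psi> \<le> s \<and>
     (\<forall>\<Phi>. \<Phi> \<subseteq> Ats \<and> finite \<Phi> \<and> card \<Phi> \<le> s \<longrightarrow> norm (proj \<Phi> R) \<le> norm (proj \<Psi> R))"

definition admira_run :: "('m::finite,'n::finite) cmat set \<Rightarrow> (('m,'n) cmat \<Rightarrow> complex^'p::finite)
    \<Rightarrow> complex^'p \<Rightarrow> nat \<Rightarrow> (nat \<Rightarrow> ('m,'n) cmat) \<Rightarrow> bool" where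
  "admira_run Ats A b r Xh \<longleftrightarrow>
    (\<exists>\<Psi>h \<Psi>' \<Psi>t Xt.
       Xh 0 = 0 \<and> \<Psi>h 0 = {} \<and>
       (\<forall>k.
          best_atoms Ats (2 * r) (adjoint_op A (b - A (Xh k))) (\<Psi>' (Suc k)) \<and>
          \<Psi>t (Suc k) = \<Psi>' (Suc k) \<union> \<Psi>h k \<and>
          Xt (Suc k) \<in> mspan (\<Psi>t (Suc k)) \<and>
          (\<forall>X\<in>mspan (\<Psi>t (Suc k)). norm (b - A (Xt (Suc k))) \<le> norm (b - A X)) \<and>
          best_atoms Ats r (Xt (Suc k)) (\<Psi>h (Suc k)) \<and>
          Xh (Suc k) = proj (\<Psi>h (Suc k)) (Xt (Suc k))))"

end

theory Submission
  imports Defs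
begin

text \<open>
Put \<open>X = X0r\<close> and \<open>e = A (X0 - X) + \<nu>\<close>, so that \<open>b = A X + e\<close> with \<open>X\<close> in the span of at most \<open>r\<close>
atoms. Every matrix occurring in one iteration lies in the span of at most \<open>4r\<close> atoms, hence has
rank at most \<open>4r\<close>, and there \<open>A\<close> is a near-isometry: \<open>|\<langle>A D, A Y\<rangle> - \<langle>D, Y\<rangle>| \<le> \<delta> |D| |Y|\<close>.
Consequently the identification step captures \<open>D = X - Xh k\<close> up to \<open>2\<delta>|D| + 2.04|e|\<close>, the least
squares step loses only a factor \<open>1 / (1 - \<delta>)\<close>, and pruning to \<open>r\<close> atoms at most doubles the error, so
that \<open>|X - Xh (k + 1)| \<le> |X - Xh k| / 6 + (51/8) |e|\<close>.

The noise \<open>|A (X0 - X)|\<close> is at most \<open>1.02 (|X0 - X|\<^sub>F + |X0 - X|\<^sub>* / sqrt r)\<close>: cut a singular value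
decomposition of \<open>X0 - X\<close> into blocks of \<open>r\<close> consecutive singular values. Each block has rank at most
\<open>r\<close>, and its Frobenius norm is at most the nuclear norm of the previous block divided by \<open>sqrt r\<close>.
\<close>

section \<open>Complex inner products and scalars\<close>

lemma inner_eq_Re_cinner_mat: "inner X Y = Re (cinner_mat X Y)"
  by (simp add: cinner_mat_def inner_vec_def inner_complex_def Re_sum)

lemma inner_eq_Re_cinner_vec: "inner x y = Re (cinner_vec x y)"
  by (simp add: cinner_vec_def inner_vec_def inner_complex_def Re_sum)

lemma smat_of_real: "smat (complex_of_real c) X = c *\<^sub>R X"
  by (simp add: smat_def vec_eq_iff scaleR_conv_of_real[symmetric])

lemma svec_of_real: "svec (complex_of_real c) x = c *\<^sub>R x"
  by (simp add: svec_def vec_eq_iff scaleR_conv_of_real[symmetric])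

lemma smat_add_left: "smat (a + b) X = smat a X + smat b X"
  by (simp add: smat_def vec_eq_iff algebra_simps)

lemma smat_zero_left [simp]: "smat 0 X = 0"
  by (simp add: smat_def vec_eq_iff)

lemma smat_one [simp]: "smat 1 X = X"
  by (simp add: smat_def vec_eq_iff)

lemma smat_smat: "smat a (smat b X) = smat (a * b) X"
  by (simp add: smat_def vec_eq_iff)

lemma smat_sum: "smat a (sum f S) = (\<Sum>x\<in>S. smat a (f x))"
  by (simp add: smat_def vec_eq_iff sum_component sum_distrib_left)

lemma row_smat: "smat c X $ i = c *s X $ i"
  by (simp add: smat_def vec_eq_iff)

lemma smat_mult_vec: "smat c M *v w = c *s (M *v w)"
  by (simp add: smat_def matrix_vector_mult_def vec_eq_iff sum_distrib_left algebra_simps)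

lemma cinner_mat_smat_left: "cinner_mat (smat c X) Y = c * cinner_mat X Y"
  by (simp add: cinner_mat_def smat_def sum_distrib_left algebra_simps)

lemma cinner_mat_smat_right: "cinner_mat X (smat c Y) = cnj c * cinner_mat X Y"
  by (simp add: cinner_mat_def smat_def sum_distrib_left algebra_simps)

lemma cinner_mat_diff_right: "cinner_mat X (Y - Z) = cinner_mat X Y - cinner_mat X Z"
  by (simp add: cinner_mat_def sum_subtractf algebra_simps)

lemma cinner_mat_eq_0_iff:
  "cinner_mat X Y = 0 \<longleftrightarrow> inner X Y = 0 \<and> inner X (smat \<i> Y) = 0"
  by (simp add: inner_eq_Re_cinner_mat cinner_mat_smat_right complex_eq_iff)

lemma cinner_mat_outer:
  "cinner_mat (outer u v) (outer u' v') = cinner_vec u u' * cinner_vec v' v"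
  by (simp add: cinner_mat_def outer_def cinner_vec_def sum_product mult_ac) (subst sum.swap, simp)

lemma cinner_vec_self: "cinner_vec x x = complex_of_real ((norm x)\<^sup>2)"
proof (rule complex_eqI)
  show "Re (cinner_vec x x) = Re (complex_of_real ((norm x)\<^sup>2))"
    by (simp add: inner_eq_Re_cinner_vec[symmetric] power2_norm_eq_inner)
  show "Im (cinner_vec x x) = Im (complex_of_real ((norm x)\<^sup>2))"
    by (simp add: cinner_vec_def Im_sum)
qed

lemma cinner_vec_self_eq_1_iff: "cinner_vec x x = 1 \<longleftrightarrow> norm x = 1"
  unfolding cinner_vec_self of_real_eq_1_iff using power2_eq_iff_nonneg[of "norm x" 1] by simp

lemma cinner_vec_zero_left [simp]: "cinner_vec 0 y = 0"
  and cinner_vec_zero_right [simp]: "cinner_vec y 0 = 0"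
  by (simp_all add: cinner_vec_def)

lemma cinner_vec_commute: "cinner_vec y x = cnj (cinner_vec x y)"
  by (simp add: cinner_vec_def cnj_sum mult.commute)

lemma cinner_vec_add_left: "cinner_vec (x + y) z = cinner_vec x z + cinner_vec y z"
  by (simp add: cinner_vec_def sum.distrib algebra_simps)

lemma cinner_vec_add_right: "cinner_vec z (x + y) = cinner_vec z x + cinner_vec z y"
  by (simp add: cinner_vec_def sum.distrib algebra_simps)

lemma cinner_vec_diff_left: "cinner_vec (x - y) z = cinner_vec x z - cinner_vec y z"
  by (simp add: cinner_vec_def sum_subtractf algebra_simps)

lemma cinner_vec_diff_right: "cinner_vec z (x - y) = cinner_vec z x - cinner_vec z y"
  by (simp add: cinner_vec_def sum_subtractf algebra_simps)

lemma cinner_vec_scale_left: "cinner_vec (c *s x) y = c * cinner_vec x y"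
  by (simp add: cinner_vec_def sum_distrib_left algebra_simps)

lemma cinner_vec_scale_right: "cinner_vec x (c *s y) = cnj c * cinner_vec x y"
  by (simp add: cinner_vec_def sum_distrib_left algebra_simps)

lemma cinner_vec_svec_left: "cinner_vec (svec c x) y = c * cinner_vec x y"
  by (simp add: cinner_vec_def svec_def sum_distrib_left algebra_simps)

lemma cinner_vec_sum_left: "cinner_vec (sum f S) y = (\<Sum>i\<in>S. cinner_vec (f i) y)"
  by (induct S rule: infinite_finite_induct) (auto simp: cinner_vec_add_left)

lemma cinner_vec_sum_right: "cinner_vec y (sum f S) = (\<Sum>i\<in>S. cinner_vec y (f i))"
  by (induct S rule: infinite_finite_induct) (auto simp: cinner_vec_add_right)

lemma norm_vector_scalar_mult: "norm (c *s (x::complex^'n::finite)) = cmod c * norm x"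
proof -
  have "cinner_vec (c *s x) (c *s x) = (c * cnj c) * cinner_vec x x"
    by (simp add: cinner_vec_scale_left cinner_vec_scale_right)
  also have "c * cnj c = complex_of_real ((cmod c)\<^sup>2)" by (rule complex_norm_square[symmetric])
  then have "(c * cnj c) * cinner_vec x x = complex_of_real ((cmod c)\<^sup>2 * (norm x)\<^sup>2)"
    by (simp add: cinner_vec_self)
  finally have "(norm (c *s x))\<^sup>2 = (cmod c * norm x)\<^sup>2"
    by (simp only: cinner_vec_self of_real_eq_iff power_mult_distrib)
  then show ?thesis by (simp add: power2_eq_iff_nonneg)
qed

lemma scaleR_eq_vector_scalar_mult: "t *\<^sub>R (x::complex^'n::finite) = complex_of_real t *s x"
  by (simp add: vec_eq_iff vector_scalar_mult_def) (simp add: scaleR_conv_of_real)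

lemma matrix_vector_mult_scale: "(Y::complex^'n::finite^'m::finite) *v (c *s x) = c *s (Y *v x)"
  unfolding matrix_vector_mult_def
  by (simp add: vec_eq_iff sum_distrib_left) (intro allI sum.cong refl, simp add: mult.left_commute)

lemma linear_matrix_vector_mult: "linear (\<lambda>w. (Y::complex^'n::finite^'m::finite) *v w)"
  by (rule linearI)
    (simp_all add: matrix_vector_right_distrib scaleR_eq_vector_scalar_mult matrix_vector_mult_scale)

lemma outer_mult_vec: "outer u v *v w = cinner_vec w v *s u"
  by (simp add: outer_def matrix_vector_mult_def vec_eq_iff cinner_vec_def sum_distrib_left algebra_simps)

lemma sum_mult_vec: "sum M S *v w = (\<Sum>i\<in>S. M i *v w)"
  by (induct S rule: infinite_finite_induct) (auto simp: matrix_vector_mult_add_rdistrib)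

lemma clinear_op_imp_linear:
  assumes "clinear_op A"
  shows "linear A"
proof
  fix X Y show "A (X + Y) = A X + A Y" using assms by (simp add: clinear_op_def)
next
  fix c :: real and X
  have "A (smat (complex_of_real c) X) = svec (complex_of_real c) (A X)"
    using assms by (simp add: clinear_op_def)
  then show "A (c *\<^sub>R X) = c *\<^sub>R A X" by (simp add: smat_of_real svec_of_real)
qed

lemma power2_norm_add_inner: "(norm (a + b))\<^sup>2 = (norm a)\<^sup>2 + 2 * inner a b + (norm b)\<^sup>2"
  and power2_norm_diff_inner: "(norm (a - b))\<^sup>2 = (norm a)\<^sup>2 - 2 * inner a b + (norm b)\<^sup>2"
  for a b :: "'a::real_inner"
  by (simp_all add: power2_norm_eq_inner inner_add_left inner_add_right inner_diff_left
      inner_diff_right inner_commute)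

section \<open>Spans of atoms and orthogonal projections\<close>

lemma mspan_finite:
  assumes "finite S"
  shows "mspan S = {X. \<exists>c. X = (\<Sum>\<psi>\<in>S. smat (c \<psi>) \<psi>)}"
proof
  show "mspan S \<subseteq> {X. \<exists>c. X = (\<Sum>\<psi>\<in>S. smat (c \<psi>) \<psi>)}"
  proof
    fix X assume "X \<in> mspan S"
    then obtain F c where F: "finite F" "F \<subseteq> S" "X = (\<Sum>\<psi>\<in>F. smat (c \<psi>) \<psi>)"
      by (auto simp: mspan_def)
    have "X = (\<Sum>\<psi>\<in>S. smat (if \<psi> \<in> F then c \<psi> else 0) \<psi>)"
      unfolding F(3) by (rule sum.mono_neutral_cong_left) (use assms F in auto)
    then show "X \<in> {X. \<exists>c. X = (\<Sum>\<psi>\<in>S. smat (c \<psi>) \<psi>)}"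
      by (intro CollectI exI[of _ "\<lambda>\<psi>. if \<psi> \<in> F then c \<psi> else 0"])
  qed
qed (use assms in \<open>auto simp: mspan_def\<close>)

lemma mspan_zero [simp]: "0 \<in> mspan S"
  unfolding mspan_def by (rule CollectI, rule exI[of _ "{}"]) auto

lemma mspan_base: "\<psi> \<in> S \<Longrightarrow> \<psi> \<in> mspan S"
  unfolding mspan_def by (rule CollectI, rule exI[of _ "{\<psi>}"], rule exI[of _ "\<lambda>_. 1"]) auto

lemma mspan_add:
  assumes "X \<in> mspan S" "Y \<in> mspan S"
  shows "X + Y \<in> mspan S"
proof -
  obtain F c where F: "finite F" "F \<subseteq> S" "X = (\<Sum>\<psi>\<in>F. smat (c \<psi>) \<psi>)"
    using assms(1) by (auto simp: mspan_def)
  obtain G d where G: "finite G" "G \<subseteq> S" "Y = (\<Sum>\<psi>\<in>G. smat (d \<psi>) \<psi>)"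
    using assms(2) by (auto simp: mspan_def)
  have "X \<in> mspan (F \<union> G)" "Y \<in> mspan (F \<union> G)"
    using F G by (auto simp: mspan_def)
  then obtain c' d' where "X = (\<Sum>\<psi>\<in>F \<union> G. smat (c' \<psi>) \<psi>)" "Y = (\<Sum>\<psi>\<in>F \<union> G. smat (d' \<psi>) \<psi>)"
    using F G by (auto simp: mspan_finite)
  then have "X + Y = (\<Sum>\<psi>\<in>F \<union> G. smat (c' \<psi> + d' \<psi>) \<psi>)"
    by (simp add: smat_add_left sum.distrib)
  then show ?thesis using F G unfolding mspan_def
    by (intro CollectI exI[of _ "F \<union> G"] exI[of _ "\<lambda>\<psi>. c' \<psi> + d' \<psi>"]) auto
qed

lemma mspan_smat:
  assumes "X \<in> mspan S"
  shows "smat a X \<in> mspan S"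
proof -
  obtain F c where F: "finite F" "F \<subseteq> S" "X = (\<Sum>\<psi>\<in>F. smat (c \<psi>) \<psi>)"
    using assms by (auto simp: mspan_def)
  have "smat a X = (\<Sum>\<psi>\<in>F. smat (a * c \<psi>) \<psi>)"
    unfolding F(3) by (simp add: smat_sum smat_smat)
  then show ?thesis using F unfolding mspan_def
    by (intro CollectI exI[of _ F] exI[of _ "\<lambda>\<psi>. a * c \<psi>"]) auto
qed

lemma subspace_mspan: "subspace (mspan S)"
  unfolding subspace_def using mspan_smat[of _ S "complex_of_real _"]
  by (simp add: mspan_add smat_of_real)

lemma mspan_diff: "X \<in> mspan S \<Longrightarrow> Y \<in> mspan S \<Longrightarrow> X - Y \<in> mspan S"
  by (rule subspace_diff[OF subspace_mspan])

lemma mspan_sum: "(\<And>i. i \<in> I \<Longrightarrow> f i \<in> mspan S) \<Longrightarrow> sum f I \<in> mspan S"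
  by (rule subspace_sum[OF subspace_mspan])

lemma mspan_mono: "S \<subseteq> T \<Longrightarrow> mspan S \<subseteq> mspan T"
  unfolding mspan_def by blast

lemma mspan_UnI1: "X \<in> mspan S \<Longrightarrow> X \<in> mspan (S \<union> T)"
  and mspan_UnI2: "X \<in> mspan T \<Longrightarrow> X \<in> mspan (S \<union> T)"
  using mspan_mono[of S "S \<union> T"] mspan_mono[of T "S \<union> T"] by auto

text \<open>
The projection is defined through complex orthogonality; since spans are closed under
multiplication by \<open>\<i>\<close>, this is the same as orthogonality for the real inner product \<open>Re \<langle>_, _\<rangle>\<close>.
\<close>

lemma proj_eqI:
  assumes "Y \<in> mspan S" "\<And>Z. Z \<in> mspan S \<Longrightarrow> inner (X - Y) Z = 0"
  shows "proj S X = Y"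
proof -
  have complex_orth: "(\<forall>Z\<in>mspan S. cinner_mat (X - Y') Z = 0) \<longleftrightarrow> (\<forall>Z\<in>mspan S. inner (X - Y') Z = 0)"
    for Y' using mspan_smat[of _ S \<i>] by (auto simp: cinner_mat_eq_0_iff)
  show ?thesis
    unfolding proj_def
  proof (rule the_equality)
    fix Y' assume Y': "Y' \<in> mspan S \<and> (\<forall>Z\<in>mspan S. cinner_mat (X - Y') Z = 0)"
    have "Y' - Y \<in> mspan S" using Y' assms(1) by (simp add: mspan_diff)
    then have "inner (Y' - Y) (Y' - Y) = inner (X - Y) (Y' - Y) - inner (X - Y') (Y' - Y)"
      by (simp add: inner_diff_left)
    also have "\<dots> = 0" using Y' assms \<open>Y' - Y \<in> mspan S\<close> complex_orth by auto
    finally show "Y' = Y" by simp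
  qed (use assms complex_orth in auto)
qed

lemma proj_exists: "\<exists>Y. Y \<in> mspan S \<and> (\<forall>Z\<in>mspan S. inner (X - Y) Z = 0)"
proof -
  obtain y z where "y \<in> span (mspan S)" "\<And>w. w \<in> span (mspan S) \<Longrightarrow> orthogonal z w" "X = y + z"
    using orthogonal_subspace_decomp_exists by blast
  then show ?thesis by (auto simp: orthogonal_def span_eq_iff[THEN iffD2, OF subspace_mspan])
qed

lemma proj_in_mspan: "proj S X \<in> mspan S"
  and proj_orthogonal: "Z \<in> mspan S \<Longrightarrow> inner (X - proj S X) Z = 0"
  using proj_exists[of S X] proj_eqI by metis+

lemma inner_proj: "Z \<in> mspan S \<Longrightarrow> inner (proj S X) Z = inner X Z"
  using proj_orthogonal[of Z S X] by (simp add: inner_diff_left)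

lemma proj_id: "X \<in> mspan S \<Longrightarrow> proj S X = X"
  by (rule proj_eqI) simp_all

lemma proj_diff: "proj S (X - Y) = proj S X - proj S Y"
  by (rule proj_eqI) (simp_all add: mspan_diff proj_in_mspan inner_diff_left inner_proj)

lemma proj_proj_mspan:
  assumes "mspan T \<subseteq> mspan W"
  shows "proj T (proj W X) = proj T X"
  by (rule proj_eqI) (use assms in \<open>auto simp: proj_in_mspan inner_diff_left inner_proj\<close>)

lemma norm_proj_Pythagoras: "(norm X)\<^sup>2 = (norm (proj S X))\<^sup>2 + (norm (X - proj S X))\<^sup>2"
proof -
  have "orthogonal (proj S X) (X - proj S X)"
    using proj_orthogonal[OF proj_in_mspan] by (simp add: orthogonal_def inner_commute)
  then show ?thesis using norm_add_Pythagorean[of "proj S X" "X - proj S X"] by simp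
qed

lemma proj_nearest:
  assumes "Z \<in> mspan S"
  shows "norm (X - proj S X) \<le> norm (X - Z)"
proof -
  have "inner (X - proj S X) (proj S X - Z) = 0"
    using assms by (intro proj_orthogonal mspan_diff proj_in_mspan)
  then have "(norm (X - Z))\<^sup>2 = (norm (X - proj S X))\<^sup>2 + (norm (proj S X - Z))\<^sup>2"
    using norm_add_Pythagorean[of "X - proj S X" "proj S X - Z"] by (simp add: orthogonal_def)
  then have "(norm (X - proj S X))\<^sup>2 \<le> (norm (X - Z))\<^sup>2" by simp
  then show ?thesis by (simp add: power2_le_iff_abs_le)
qed

lemma norm_proj_residual_le: "norm (X - proj S X) \<le> norm X"
  using proj_nearest[of 0 S X] by simp

lemma norm_proj_residual_mono:
  assumes "norm (proj T X) \<le> norm (proj S X)"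
  shows "norm (X - proj S X) \<le> norm (X - proj T X)"
proof -
  have "(norm (proj T X))\<^sup>2 \<le> (norm (proj S X))\<^sup>2" using assms by (simp add: power_mono)
  then have "(norm (X - proj S X))\<^sup>2 \<le> (norm (X - proj T X))\<^sup>2"
    using norm_proj_Pythagoras[of X S] norm_proj_Pythagoras[of X T] by linarith
  then show ?thesis by (simp add: power2_le_iff_abs_le)
qed

lemma norm_proj_le_if_inner_le:
  assumes "B \<ge> 0" and "\<And>Y. Y \<in> mspan S \<Longrightarrow> inner H Y \<le> B * norm Y"
  shows "norm (proj S H) \<le> B"
proof (cases "proj S H = 0")
  case True
  with assms(1) show ?thesis by simp
next
  case False
  have "(norm (proj S H))\<^sup>2 = inner H (proj S H)"
    using inner_proj[OF proj_in_mspan[of S H], of H] by (simp add: power2_norm_eq_inner)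
  also have "\<dots> \<le> B * norm (proj S H)" using assms(2)[OF proj_in_mspan] .
  finally show ?thesis using False by (simp add: power2_eq_square)
qed

section \<open>Rank and atoms\<close>

definition few_atoms :: "('m::finite,'n::finite) cmat set \<Rightarrow> nat \<Rightarrow> ('m,'n) cmat set \<Rightarrow> bool" where
  "few_atoms Ats s \<Psi> \<longleftrightarrow> \<Psi> \<subseteq> Ats \<and> finite \<Psi> \<and> card \<Psi> \<le> s"

lemma best_atoms_iff:
  "best_atoms Ats s R \<Psi> \<longleftrightarrow>
     few_atoms Ats s \<Psi> \<and> (\<forall>\<Phi>. few_atoms Ats s \<Phi> \<longrightarrow> norm (proj \<Phi> R) \<le> norm (proj \<Psi> R))"
  by (simp add: best_atoms_def few_atoms_def)

lemma few_atoms_Un: "few_atoms Ats s \<Psi> \<Longrightarrow> few_atoms Ats t \<Phi> \<Longrightarrow> few_atoms Ats (s + t) (\<Psi> \<union> \<Phi>)"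
  unfolding few_atoms_def by (meson Un_least card_Un_le add_mono finite_UnI order_trans)

lemma rows_eq_range: "rows X = range (\<lambda>i. X $ i)"
  by (auto simp: rows_def row_def)

lemma rank_le_card_if_rows_in_span:
  fixes X :: "'a::field^'n::finite^'m::finite"
  assumes "finite W" "\<And>i. X $ i \<in> vec.span W"
  shows "rank X \<le> card W"
  unfolding row_rank_def_gen using assms by (intro vec.dim_le_card) (auto simp: rows_eq_range)

lemma rows_basis_exists:
  fixes X :: "'a::field^'n::finite^'m::finite"
  obtains B where "finite B" "card B = rank X" "\<And>i. X $ i \<in> vec.span B"
proof -
  obtain B where B: "B \<subseteq> rows X" "vec.independent B" "rows X \<subseteq> vec.span B" "card B = vec.dim (rows X)"
    using vec.basis_exists by blast
  show ?thesis
  proof (rule that)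
    show "finite B" using B(2) by (rule vec.finiteI_independent)
    show "card B = rank X" using B(4) by (simp add: row_rank_def_gen)
    show "X $ i \<in> vec.span B" for i using B(3) by (auto simp: rows_eq_range)
  qed
qed

lemma rank_le_card_if_mspan:
  fixes F :: "('m::finite,'n::finite) cmat set"
  assumes "finite F" "\<And>\<psi>. \<psi> \<in> F \<Longrightarrow> rank \<psi> \<le> 1" "X \<in> mspan F"
  shows "rank X \<le> card F"
proof -
  obtain c where X: "X = (\<Sum>\<psi>\<in>F. smat (c \<psi>) \<psi>)" using assms(1,3) mspan_finite by blast
  have "\<forall>\<psi>::('m,'n) cmat. \<exists>B. finite B \<and> card B = rank \<psi> \<and> (\<forall>i. \<psi> $ i \<in> vec.span B)"
    using rows_basis_exists by metis
  then obtain B :: "('m,'n) cmat \<Rightarrow> (complex^'n) set"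
    where B: "\<And>\<psi>. finite (B \<psi>)" "\<And>\<psi>. card (B \<psi>) = rank \<psi>"
      "\<And>\<psi> i. \<psi> $ i \<in> vec.span (B \<psi>)"
    by metis
  have "rank X \<le> card (\<Union>\<psi>\<in>F. B \<psi>)"
  proof (rule rank_le_card_if_rows_in_span)
    show "finite (\<Union>\<psi>\<in>F. B \<psi>)" using assms(1) B(1) by blast
    fix i
    have "smat (c \<psi>) \<psi> $ i \<in> vec.span (\<Union>\<psi>\<in>F. B \<psi>)" if "\<psi> \<in> F" for \<psi>
      using that B(3)[of \<psi> i] vec.span_mono[of "B \<psi>" "\<Union>\<psi>\<in>F. B \<psi>"]
      by (auto simp: row_smat intro: vec.span_scale)
    then show "X $ i \<in> vec.span (\<Union>\<psi>\<in>F. B \<psi>)" unfolding X sum_component by (rule vec.span_sum)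
  qed
  also have "\<dots> \<le> (\<Sum>\<psi>\<in>F. card (B \<psi>))" using assms(1) by (rule card_UN_le)
  also have "\<dots> \<le> (\<Sum>\<psi>\<in>F. 1)" using assms(2) B(2) by (intro sum_mono) simp
  finally show ?thesis by simp
qed

lemma rank_le_if_few_atoms:
  assumes "atom_set Ats" "few_atoms Ats s F" "X \<in> mspan F"
  shows "rank X \<le> s"
  using assms rank_le_card_if_mspan[of F X] by (fastforce simp: atom_set_def few_atoms_def)

lemma mspan_atom_if_rank_le_1:
  assumes ats: "atom_set Ats" and "rank M \<le> 1"
  shows "\<exists>F. few_atoms Ats 1 F \<and> M \<in> mspan F"
proof (cases "rank M = 0")
  case True
  then have "rows M \<subseteq> {0}" by (simp add: row_rank_def_gen vec.dim_eq_0)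
  then have "\<forall>i. M $ i = 0" by (auto simp: rows_eq_range)
  then have "M = 0" by (simp add: vec_eq_iff)
  then show ?thesis by (intro exI[of _ "{}"]) (simp add: few_atoms_def)
next
  case False
  with assms obtain \<psi> c where "\<psi> \<in> Ats" "M = smat c \<psi>"
    unfolding atom_set_def by (metis le_antisym less_one not_le)
  then show ?thesis
    by (intro exI[of _ "{\<psi>}"]) (simp add: few_atoms_def mspan_smat mspan_base)
qed

text \<open>Expanding every row in a basis of the row space writes \<open>X\<close> as a sum of \<open>rank X\<close> matrices of rank one.\<close>

lemma mspan_few_atoms_if_rank_le:
  fixes X :: "('m::finite,'n::finite) cmat"
  assumes ats: "atom_set Ats" and rk: "rank X \<le> r"
  shows "\<exists>F. few_atoms Ats r F \<and> X \<in> mspan F"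
proof -
  obtain B where B: "finite B" "card B = rank X" "\<And>i. X $ i \<in> vec.span B"
    using rows_basis_exists by blast
  have "\<forall>i. \<exists>c. X $ i = (\<Sum>v\<in>B. c v *s v)"
    using B(3) vec.span_finite[OF B(1)] by blast
  then obtain c where c: "\<And>i. X $ i = (\<Sum>v\<in>B. c i v *s v)" by metis
  define M where "M v = (\<chi> i. c i v *s v)" for v :: "complex^'n"
  have XM: "X = (\<Sum>v\<in>B. M v)"
    by (simp add: vec_eq_iff M_def sum_component c)
  have "rank (M v) \<le> card {v}" for v
    by (rule rank_le_card_if_rows_in_span) (auto simp: M_def intro: vec.span_scale vec.span_base)
  then have "\<forall>v. \<exists>F. few_atoms Ats 1 F \<and> M v \<in> mspan F"
    using mspan_atom_if_rank_le_1[OF ats] by simp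
  then obtain F where F: "\<And>v. few_atoms Ats 1 (F v)" "\<And>v. M v \<in> mspan (F v)" by metis
  have "few_atoms Ats r (\<Union>v\<in>B. F v)"
  proof -
    have "card (\<Union>v\<in>B. F v) \<le> (\<Sum>v\<in>B. card (F v))" using B(1) by (rule card_UN_le)
    also have "\<dots> \<le> (\<Sum>v\<in>B. 1)" using F(1) by (intro sum_mono) (simp add: few_atoms_def)
    finally show ?thesis using F(1) B rk by (auto simp: few_atoms_def)
  qed
  moreover have "X \<in> mspan (\<Union>v\<in>B. F v)"
    unfolding XM using F(2) mspan_mono[of "F _" "\<Union>v\<in>B. F v"] by (blast intro: mspan_sum)
  ultimately show ?thesis by blast
qed

section \<open>The adjoint and the restricted isometry constant\<close>

lemma adjoint_op_inner:
  fixes A :: "('m::finite,'n::finite) cmat \<Rightarrow> complex^'p::finite"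
  assumes lin: "clinear_op A"
  shows "inner X (adjoint_op A y) = inner (A X) y"
proof -
  define Z where "Z = adjoint A y"
  have Z: "inner X Z = inner (A X) y" for X
    unfolding Z_def by (rule adjoint_works[OF clinear_op_imp_linear[OF lin]])
  have Zc: "cinner_vec (A X) y = cinner_mat X Z" for X
  proof (rule complex_eqI)
    show "Re (cinner_vec (A X) y) = Re (cinner_mat X Z)"
      using Z[of X] by (simp add: inner_eq_Re_cinner_vec inner_eq_Re_cinner_mat)
    have "A (smat (-\<i>) X) = svec (-\<i>) (A X)" using lin by (simp add: clinear_op_def)
    then show "Im (cinner_vec (A X) y) = Im (cinner_mat X Z)"
      using Z[of "smat (-\<i>) X"]
      by (simp add: inner_eq_Re_cinner_vec inner_eq_Re_cinner_mat cinner_vec_svec_left cinner_mat_smat_left)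
  qed
  have "adjoint_op A y = Z"
    unfolding adjoint_op_def
  proof (rule the_equality)
    fix Z' assume "\<forall>X. cinner_vec (A X) y = cinner_mat X Z'"
    then have "cinner_mat (Z' - Z) (Z' - Z) = 0" using Zc by (simp add: cinner_mat_diff_right)
    then have "inner (Z' - Z) (Z' - Z) = 0" by (simp add: inner_eq_Re_cinner_mat)
    then show "Z' = Z" by simp
  qed (use Zc in blast)
  then show ?thesis using Z by simp
qed

lemma rip_admissible_exists:
  fixes A :: "('m::finite,'n::finite) cmat \<Rightarrow> complex^'p::finite"
  assumes "linear A"
  shows "\<exists>\<delta>\<ge>0. \<forall>X. rank X \<le> s \<longrightarrow>
           (1 - \<delta>) * (norm X)\<^sup>2 \<le> (norm (A X))\<^sup>2 \<and> (norm (A X))\<^sup>2 \<le> (1 + \<delta>) * (norm X)\<^sup>2"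
proof -
  have "bounded_linear A" using assms by (simp add: linear_conv_bounded_linear)
  then obtain K where K: "\<And>x. norm (A x) \<le> norm x * K" using bounded_linear.bounded by blast
  have "(norm (A X))\<^sup>2 \<le> (1 + (1 + K\<^sup>2)) * (norm X)\<^sup>2" for X
  proof -
    have "(norm (A X))\<^sup>2 \<le> (norm X * K)\<^sup>2" using K[of X] by (simp add: power_mono)
    also have "\<dots> \<le> (1 + (1 + K\<^sup>2)) * (norm X)\<^sup>2" by (simp add: power_mult_distrib algebra_simps)
    finally show ?thesis .
  qed
  moreover have "(1 - (1 + K\<^sup>2)) * (norm X)\<^sup>2 \<le> (norm (A X))\<^sup>2" for X
  proof -
    have "(1 - (1 + K\<^sup>2)) * (norm X)\<^sup>2 \<le> 0" by (simp add: mult_nonpos_nonneg)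
    then show ?thesis using zero_le_power2[of "norm (A X)"] by linarith
  qed
  ultimately show ?thesis by (intro exI[of _ "1 + K\<^sup>2"]) (simp add: add_nonneg_nonneg)
qed

lemma
  fixes A :: "('m::finite,'n::finite) cmat \<Rightarrow> complex^'p::finite"
  assumes lin: "clinear_op A"
  shows rip_const_nonneg: "rip_const A s \<ge> 0"
    and rip_const_lower: "rank X \<le> s \<Longrightarrow> (1 - rip_const A s) * (norm X)\<^sup>2 \<le> (norm (A X))\<^sup>2"
    and rip_const_upper: "rank X \<le> s \<Longrightarrow> (norm (A X))\<^sup>2 \<le> (1 + rip_const A s) * (norm X)\<^sup>2"
proof -
  define S where "S = {\<delta>. \<delta> \<ge> 0 \<and> (\<forall>X. rank X \<le> s \<longrightarrow>
      (1 - \<delta>) * (norm X)\<^sup>2 \<le> (norm (A X))\<^sup>2 \<and> (norm (A X))\<^sup>2 \<le> (1 + \<delta>) * (norm X)\<^sup>2)}"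
  have rc: "rip_const A s = Inf S" unfolding S_def rip_const_def by simp
  have ne: "S \<noteq> {}"
    using rip_admissible_exists[OF clinear_op_imp_linear[OF lin], of s] unfolding S_def by blast
  have A0: "A 0 = 0" using clinear_op_imp_linear[OF lin] by (rule linear_0)
  show "rip_const A s \<ge> 0" unfolding rc by (rule cInf_greatest[OF ne]) (simp add: S_def)
  assume rk: "rank X \<le> s"
  show "(1 - rip_const A s) * (norm X)\<^sup>2 \<le> (norm (A X))\<^sup>2"
  proof (cases "X = 0")
    case False
    then have n: "(norm X)\<^sup>2 > 0" by simp
    have "1 - (norm (A X))\<^sup>2 / (norm X)\<^sup>2 \<le> Inf S"
    proof (rule cInf_greatest[OF ne])
      fix d assume "d \<in> S"
      then have "(1 - d) * (norm X)\<^sup>2 \<le> (norm (A X))\<^sup>2" using rk unfolding S_def by blast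
      then show "1 - (norm (A X))\<^sup>2 / (norm X)\<^sup>2 \<le> d" using n by (simp add: field_simps)
    qed
    then show ?thesis using n unfolding rc by (simp add: field_simps)
  qed (simp add: A0)
  show "(norm (A X))\<^sup>2 \<le> (1 + rip_const A s) * (norm X)\<^sup>2"
  proof (cases "X = 0")
    case False
    then have n: "(norm X)\<^sup>2 > 0" by simp
    have "(norm (A X))\<^sup>2 / (norm X)\<^sup>2 - 1 \<le> Inf S"
    proof (rule cInf_greatest[OF ne])
      fix d assume "d \<in> S"
      then have "(norm (A X))\<^sup>2 \<le> (1 + d) * (norm X)\<^sup>2" using rk unfolding S_def by blast
      then show "(norm (A X))\<^sup>2 / (norm X)\<^sup>2 - 1 \<le> d" using n by (simp add: field_simps)
    qed
    then show ?thesis using n unfolding rc by (simp add: field_simps)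
  qed (simp add: A0)
qed

lemma norm_le_if_rip_const_le:
  assumes lin: "clinear_op A" and rip: "rip_const A s \<le> 0.04" and rk: "rank Z \<le> s"
  shows "norm (A Z) \<le> 1.02 * norm Z"
proof -
  have "(norm (A Z))\<^sup>2 \<le> (1 + rip_const A s) * (norm Z)\<^sup>2" by (rule rip_const_upper[OF lin rk])
  also have "\<dots> \<le> 1.0404 * (norm Z)\<^sup>2" using rip by (intro mult_right_mono) auto
  also have "\<dots> = (1.02 * norm Z)\<^sup>2" by (simp add: power2_eq_square)
  finally show ?thesis by (simp add: power2_le_iff_abs_le)
qed

text \<open>Polarisation turns the near-isometry of norms on a subspace into one of inner products.\<close>

lemma inner_deviation_le_unit:
  fixes A :: "'a::real_inner \<Rightarrow> 'b::real_inner"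
  assumes la: "linear A"
    and rp: "\<And>Z. Z \<in> V \<Longrightarrow> (1 - \<delta>) * (norm Z)\<^sup>2 \<le> (norm (A Z))\<^sup>2 \<and> (norm (A Z))\<^sup>2 \<le> (1 + \<delta>) * (norm Z)\<^sup>2"
    and D: "D + Y \<in> V" "D - Y \<in> V" and n: "norm D = 1" "norm Y = 1"
  shows "\<bar>inner (A D) (A Y) - inner D Y\<bar> \<le> \<delta>"
proof -
  define a where "a = (norm (D + Y))\<^sup>2"
  define b where "b = (norm (D - Y))\<^sup>2"
  define \<alpha> where "\<alpha> = (norm (A D + A Y))\<^sup>2"
  define \<beta> where "\<beta> = (norm (A D - A Y))\<^sup>2"
  have "A (D + Y) = A D + A Y" "A (D - Y) = A D - A Y" using la by (simp_all add: linear_add linear_diff)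
  then have "(1 - \<delta>) * a \<le> \<alpha>" "\<alpha> \<le> (1 + \<delta>) * a" "(1 - \<delta>) * b \<le> \<beta>" "\<beta> \<le> (1 + \<delta>) * b"
    using rp[OF D(1)] rp[OF D(2)] by (auto simp: a_def b_def \<alpha>_def \<beta>_def)
  moreover have "a + b = 4"
    using n by (simp add: a_def b_def power2_norm_add_inner power2_norm_diff_inner)
  then have "\<delta> * a + \<delta> * b = 4 * \<delta>" by (simp add: distrib_left[symmetric])
  moreover have "4 * (inner (A D) (A Y) - inner D Y) = (\<alpha> - a) - (\<beta> - b)"
    by (simp add: a_def b_def \<alpha>_def \<beta>_def power2_norm_add_inner power2_norm_diff_inner algebra_simps)
  ultimately show ?thesis by (simp add: algebra_simps abs_le_iff)
qed

lemma inner_deviation_le: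
  fixes A :: "'a::real_inner \<Rightarrow> 'b::real_inner"
  assumes la: "linear A"
    and rp: "\<And>Z. Z \<in> V \<Longrightarrow> (1 - \<delta>) * (norm Z)\<^sup>2 \<le> (norm (A Z))\<^sup>2 \<and> (norm (A Z))\<^sup>2 \<le> (1 + \<delta>) * (norm Z)\<^sup>2"
    and V: "subspace V" and D: "D \<in> V" "Y \<in> V"
  shows "\<bar>inner (A D) (A Y) - inner D Y\<bar> \<le> \<delta> * norm D * norm Y"
proof (cases "D = 0 \<or> Y = 0")
  case True then show ?thesis using la by (auto simp: linear_0)
next
  case False
  define D' where "D' = (1 / norm D) *\<^sub>R D"
  define Y' where "Y' = (1 / norm Y) *\<^sub>R Y"
  have "D' \<in> V" "Y' \<in> V" using V D by (auto simp: D'_def Y'_def subspace_scale)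
  then have dev: "\<bar>inner (A D') (A Y') - inner D' Y'\<bar> \<le> \<delta>"
    using False V by (intro inner_deviation_le_unit[OF la rp]) (auto simp: D'_def Y'_def subspace_add subspace_diff)
  have "inner (A D) (A Y) - inner D Y = (norm D * norm Y) * (inner (A D') (A Y') - inner D' Y')"
    using False la by (simp add: D'_def Y'_def linear_scale algebra_simps)
  then have "\<bar>inner (A D) (A Y) - inner D Y\<bar> = (norm D * norm Y) * \<bar>inner (A D') (A Y') - inner D' Y'\<bar>"
    by (simp add: abs_mult)
  also have "\<dots> \<le> (norm D * norm Y) * \<delta>" using dev by (intro mult_left_mono) auto
  finally show ?thesis by (simp add: mult_ac)
qed

lemma linear_le_quadratic_imp_zero:
  fixes q K :: real
  assumes K: "K \<ge> 0" and h: "\<And>t. 2 * t * q \<le> t\<^sup>2 * K"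
  shows "q = 0"
proof (rule ccontr)
  assume "q \<noteq> 0"
  define t where "t = q / (K + 1)"
  have t: "t * (K + 1) = q" using K by (simp add: t_def)
  have "0 \<le> (t\<^sup>2 * K - 2 * t * q) * (K + 1)\<^sup>2" using h[of t] by simp
  also have "\<dots> = (t * (K + 1))\<^sup>2 * K - 2 * q * (t * (K + 1)) * (K + 1)"
    by (simp add: power2_eq_square algebra_simps)
  also have "\<dots> = - (q\<^sup>2 * (K + 2))" by (simp only: t) (simp add: power2_eq_square algebra_simps)
  finally show False using \<open>q \<noteq> 0\<close> K by (smt (verit) mult_pos_pos zero_less_power2)
qed

lemma least_squares_residual_orthogonal:
  fixes A :: "'a::real_inner \<Rightarrow> 'b::real_inner"
  assumes la: "linear A" and V: "subspace V" and Xt: "Xt \<in> V"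
    and min: "\<forall>X\<in>V. norm (b - A Xt) \<le> norm (b - A X)" and Y: "Y \<in> V"
  shows "inner (b - A Xt) (A Y) = 0"
proof (rule linear_le_quadratic_imp_zero)
  fix t :: real
  have "Xt + t *\<^sub>R Y \<in> V" using V Xt Y by (simp add: subspace_add subspace_scale)
  then have "norm (b - A Xt) \<le> norm (b - A (Xt + t *\<^sub>R Y))" using min by blast
  also have "b - A (Xt + t *\<^sub>R Y) = (b - A Xt) - t *\<^sub>R A Y" using la by (simp add: linear_add linear_scale)
  finally have "(norm (b - A Xt))\<^sup>2 \<le> (norm ((b - A Xt) - t *\<^sub>R A Y))\<^sup>2" by (simp add: power_mono)
  then show "2 * t * inner (b - A Xt) (A Y) \<le> t\<^sup>2 * (norm (A Y))\<^sup>2"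
    by (simp add: power2_norm_diff_inner power_mult_distrib)
qed simp

section \<open>One iteration of ADMiRA\<close>

lemma pruning_bound:
  assumes best: "best_atoms Ats r Xt \<Psi>" and X: "few_atoms Ats r \<Psi>s" "X \<in> mspan \<Psi>s"
  shows "norm (X - proj \<Psi> Xt) \<le> 2 * norm (X - Xt)"
proof -
  have "norm (Xt - proj \<Psi> Xt) \<le> norm (Xt - proj \<Psi>s Xt)"
    using best X(1) by (intro norm_proj_residual_mono) (simp add: best_atoms_iff)
  also have "\<dots> \<le> norm (Xt - X)" by (rule proj_nearest[OF X(2)])
  finally show ?thesis
    using norm_triangle_ineq[of "X - Xt" "Xt - proj \<Psi> Xt"] by (simp add: norm_minus_commute)
qed

context
  fixes Ats :: "('m::finite,'n::finite) cmat set" and A :: "('m,'n) cmat \<Rightarrow> complex^'p::finite"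
    and r :: nat
  assumes lin: "clinear_op A" and ats: "atom_set Ats"
begin

lemma rip_const_on_few_atoms:
  assumes "few_atoms Ats (4 * r) F" "Z \<in> mspan F"
  shows "(1 - rip_const A (4 * r)) * (norm Z)\<^sup>2 \<le> (norm (A Z))\<^sup>2 \<and>
         (norm (A Z))\<^sup>2 \<le> (1 + rip_const A (4 * r)) * (norm Z)\<^sup>2"
  using rank_le_if_few_atoms[OF ats assms] rip_const_lower[OF lin] rip_const_upper[OF lin] by blast

lemma inner_deviation_le_on_few_atoms:
  assumes "few_atoms Ats (4 * r) F" "D \<in> mspan F" "Y \<in> mspan F"
  shows "\<bar>inner (A D) (A Y) - inner D Y\<bar> \<le> rip_const A (4 * r) * norm D * norm Y"
  by (rule inner_deviation_le[OF clinear_op_imp_linear[OF lin] rip_const_on_few_atoms[OF assms(1)]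
        subspace_mspan assms(2,3)])

lemma norm_le_on_few_atoms:
  assumes "rip_const A (4 * r) \<le> 0.04" "few_atoms Ats (4 * r) F" "Z \<in> mspan F"
  shows "norm (A Z) \<le> 1.02 * norm Z"
  by (rule norm_le_if_rip_const_le[OF lin assms(1) rank_le_if_few_atoms[OF ats assms(2,3)]])

lemma inner_noise_le_on_few_atoms:
  assumes "rip_const A (4 * r) \<le> 0.04" "few_atoms Ats (4 * r) F" "Z \<in> mspan F"
  shows "inner e (A Z) \<le> 1.02 * norm e * norm Z"
proof -
  have "inner e (A Z) \<le> norm e * norm (A Z)" by (rule norm_cauchy_schwarz)
  also have "\<dots> \<le> norm e * (1.02 * norm Z)"
    using norm_le_on_few_atoms[OF assms] by (intro mult_left_mono) auto
  finally show ?thesis by simp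
qed

text \<open>On a span of at most \<open>4r\<close> atoms, \<open>A\<^sup>* A\<close> is close to the identity.\<close>

lemma proj_adjoint_near:
  assumes rip: "rip_const A (4 * r) \<le> 0.04" and W: "few_atoms Ats (4 * r) W" and D: "D \<in> mspan W"
  shows "norm (proj W (adjoint_op A (A D + e)) - D) \<le> rip_const A (4 * r) * norm D + 1.02 * norm e"
proof -
  define \<delta> where "\<delta> = rip_const A (4 * r)"
  define H where "H = proj W (adjoint_op A (A D + e)) - D"
  have "H \<in> mspan W" unfolding H_def using proj_in_mspan D by (rule mspan_diff)
  then have "H = proj W H" by (simp add: proj_id)
  also have "norm (proj W H) \<le> \<delta> * norm D + 1.02 * norm e"
  proof (rule norm_proj_le_if_inner_le)
    show "\<delta> * norm D + 1.02 * norm e \<ge> 0" using rip_const_nonneg[OF lin] by (simp add: \<delta>_def)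
    fix Y assume Y: "Y \<in> mspan W"
    have "inner (adjoint_op A (A D + e)) Y = inner (A D) (A Y) + inner e (A Y)"
      unfolding inner_commute[of _ Y] adjoint_op_inner[OF lin] by (simp add: inner_add_right inner_commute)
    then have "inner H Y = (inner (A D) (A Y) - inner D Y) + inner e (A Y)"
      using Y by (simp add: H_def inner_diff_left inner_proj)
    also have "\<dots> \<le> \<delta> * norm D * norm Y + 1.02 * norm e * norm Y"
      using inner_deviation_le_on_few_atoms[OF W D Y] inner_noise_le_on_few_atoms[OF rip W Y, where e = e]
      by (simp add: \<delta>_def)
    finally show "inner H Y \<le> (\<delta> * norm D + 1.02 * norm e) * norm Y"
      by (simp add: algebra_simps)
  qed
  finally show ?thesis by (simp add: H_def \<delta>_def)
qed

text \<open>
\<open>\<Psi>\<close> captures at least as much of the proxy \<open>G\<close> as \<open>\<Phi>\<close> does, and \<open>\<Phi>\<close> captures \<open>D\<close> exactly; since \<open>G\<close> is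
close to \<open>D\<close>, \<open>\<Psi>\<close> also captures most of \<open>D\<close>.
\<close>

lemma identification_bound:
  assumes rip: "rip_const A (4 * r) \<le> 0.04"
    and \<Phi>: "few_atoms Ats (2 * r) \<Phi>" and D: "D \<in> mspan \<Phi>"
    and best: "best_atoms Ats (2 * r) (adjoint_op A (A D + e)) \<Psi>"
  shows "norm (D - proj \<Psi> D) \<le> 2 * rip_const A (4 * r) * norm D + 2.04 * norm e"
proof -
  define R where "R = adjoint_op A (A D + e)"
  define G where "G = proj (\<Phi> \<union> \<Psi>) R"
  have \<Psi>: "few_atoms Ats (2 * r) \<Psi>" and cmp: "norm (proj \<Phi> R) \<le> norm (proj \<Psi> R)"
    using best \<Phi> by (auto simp: best_atoms_iff R_def)
  have "few_atoms Ats (4 * r) (\<Phi> \<union> \<Psi>)" using few_atoms_Un[OF \<Phi> \<Psi>] by simp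
  then have GD: "norm (G - D) \<le> rip_const A (4 * r) * norm D + 1.02 * norm e"
    using proj_adjoint_near[OF rip _ mspan_UnI1[OF D]] by (simp add: G_def R_def)
  have "proj \<Phi> G = proj \<Phi> R" "proj \<Psi> G = proj \<Psi> R"
    unfolding G_def by (simp_all add: proj_proj_mspan mspan_mono)
  then have "norm (G - proj \<Psi> G) \<le> norm (G - proj \<Phi> G)"
    using cmp by (intro norm_proj_residual_mono) simp
  also have "\<dots> \<le> norm (G - D)" by (rule proj_nearest[OF D])
  finally have "norm (G - proj \<Psi> G) \<le> norm (G - D)" .
  moreover have "D - proj \<Psi> D = (G - proj \<Psi> G) - ((G - D) - proj \<Psi> (G - D))"
    by (simp add: proj_diff)
  then have "norm (D - proj \<Psi> D) \<le> norm (G - proj \<Psi> G) + norm ((G - D) - proj \<Psi> (G - D))"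
    by (metis norm_triangle_ineq4)
  moreover have "norm ((G - D) - proj \<Psi> (G - D)) \<le> norm (G - D)" by (rule norm_proj_residual_le)
  ultimately show ?thesis using GD by simp
qed

text \<open>
Write the least squares solution as \<open>Xt = PX + Z\<close> with \<open>PX\<close> the projection of \<open>X\<close>. The normal
equations give \<open>\<parallel>\<A>Z\<parallel>\<^sup>2 = \<langle>\<A>(X - PX), \<A>Z\<rangle> + \<langle>e, \<A>Z\<rangle>\<close>, and \<open>X - PX \<bottom> Z\<close> makes the first term small.
\<close>

lemma estimation_bound:
  assumes rip: "rip_const A (4 * r) \<le> 0.04"
    and X: "few_atoms Ats r \<Psi>s" "X \<in> mspan \<Psi>s"
    and U: "few_atoms Ats (3 * r) U" and Xt: "Xt \<in> mspan U"
    and min: "\<forall>Y\<in>mspan U. norm (A X + e - A Xt) \<le> norm (A X + e - A Y)"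
  shows "(1 - rip_const A (4 * r)) * norm (X - Xt) \<le> norm (X - proj U X) + 1.02 * norm e"
proof -
  define \<delta> where "\<delta> = rip_const A (4 * r)"
  define PX where "PX = proj U X"
  define Z where "Z = Xt - PX"
  have la: "linear A" using lin by (rule clinear_op_imp_linear)
  have V: "few_atoms Ats (4 * r) (\<Psi>s \<union> U)" using few_atoms_Un[OF X(1) U] by simp
  have ZU: "Z \<in> mspan U" unfolding Z_def PX_def using Xt proj_in_mspan by (rule mspan_diff)
  then have ZV: "Z \<in> mspan (\<Psi>s \<union> U)" by (rule mspan_UnI2)
  have XPV: "X - PX \<in> mspan (\<Psi>s \<union> U)"
    using X(2) proj_in_mspan[of U X] unfolding PX_def by (intro mspan_diff mspan_UnI1 mspan_UnI2)
  have "inner (A X + e - A Xt) (A Z) = 0"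
    by (rule least_squares_residual_orthogonal[OF la subspace_mspan Xt min ZU])
  moreover have "A X + e - A Xt = A (X - PX) - A Z + e" using la by (simp add: Z_def linear_diff)
  ultimately have "inner (A Z) (A Z) = inner (A (X - PX)) (A Z) + inner e (A Z)"
    by (simp add: inner_diff_left inner_add_left)
  moreover have "inner (A (X - PX)) (A Z) \<le> \<delta> * norm (X - PX) * norm Z"
    using inner_deviation_le_on_few_atoms[OF V XPV ZV] proj_orthogonal[OF ZU, of X]
    by (simp add: \<delta>_def PX_def)
  moreover have "(1 - \<delta>) * (norm Z)\<^sup>2 \<le> inner (A Z) (A Z)"
    using rip_const_on_few_atoms[OF V ZV] by (simp add: \<delta>_def power2_norm_eq_inner)
  ultimately have "(1 - \<delta>) * norm Z * norm Z \<le> (\<delta> * norm (X - PX) + 1.02 * norm e) * norm Z"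
    using inner_noise_le_on_few_atoms[OF rip V ZV, where e = e] by (simp add: power2_eq_square algebra_simps)
  then have Zb: "(1 - \<delta>) * norm Z \<le> \<delta> * norm (X - PX) + 1.02 * norm e"
    using rip_const_nonneg[OF lin] by (cases "Z = 0") (simp_all add: \<delta>_def)
  have "norm (X - Xt) \<le> norm (X - PX) + norm Z"
    using norm_triangle_ineq4[of "X - PX" Z] by (simp add: Z_def)
  then have "(1 - \<delta>) * norm (X - Xt) \<le> (1 - \<delta>) * norm (X - PX) + (1 - \<delta>) * norm Z"
    using rip by (simp add: \<delta>_def mult_left_mono distrib_left[symmetric])
  then show ?thesis using Zb by (simp add: \<delta>_def PX_def algebra_simps)
qed

lemma admira_step_contraction:
  assumes rip: "rip_const A (4 * r) \<le> 0.04" and b: "b = A X + e"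
    and X: "few_atoms Ats r \<Psi>s" "X \<in> mspan \<Psi>s"
    and Xk: "few_atoms Ats r \<Psi>k" "Xk \<in> mspan \<Psi>k"
    and ident: "best_atoms Ats (2 * r) (adjoint_op A (b - A Xk)) \<Psi>'"
    and Xt: "Xt \<in> mspan (\<Psi>' \<union> \<Psi>k)" "\<forall>Y\<in>mspan (\<Psi>' \<union> \<Psi>k). norm (b - A Xt) \<le> norm (b - A Y)"
    and prune: "best_atoms Ats r Xt \<Psi>n"
  shows "norm (X - proj \<Psi>n Xt) \<le> 1/6 * norm (X - Xk) + 51/8 * norm e"
proof -
  define \<delta> where "\<delta> = rip_const A (4 * r)"
  define D where "D = X - Xk"
  have "b - A Xk = A D + e"
    using clinear_op_imp_linear[OF lin] by (simp add: b D_def linear_diff)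
  moreover have "few_atoms Ats (2 * r) (\<Psi>s \<union> \<Psi>k)" using few_atoms_Un[OF X(1) Xk(1)] by (simp add: mult_2)
  moreover have "D \<in> mspan (\<Psi>s \<union> \<Psi>k)"
    unfolding D_def using X(2) Xk(2) by (intro mspan_diff mspan_UnI1 mspan_UnI2)
  ultimately have identified: "norm (D - proj \<Psi>' D) \<le> 2 * (\<delta> * norm D) + 2.04 * norm e"
    using identification_bound[OF rip _ _ ident[unfolded \<open>b - A Xk = A D + e\<close>]]
    by (simp add: \<delta>_def mult.assoc)
  have U: "few_atoms Ats (3 * r) (\<Psi>' \<union> \<Psi>k)"
    using few_atoms_Un[of Ats "2 * r" \<Psi>' r \<Psi>k] ident Xk(1) by (simp add: best_atoms_iff)
  have "Xk + proj \<Psi>' D \<in> mspan (\<Psi>' \<union> \<Psi>k)"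
    using Xk(2) proj_in_mspan[of \<Psi>' D] by (intro subspace_add[OF subspace_mspan] mspan_UnI1 mspan_UnI2)
  then have "norm (X - proj (\<Psi>' \<union> \<Psi>k) X) \<le> norm (D - proj \<Psi>' D)"
    using proj_nearest[of "Xk + proj \<Psi>' D" "\<Psi>' \<union> \<Psi>k" X] by (simp add: D_def algebra_simps)
  moreover have "(1 - \<delta>) * norm (X - Xt) \<le> norm (X - proj (\<Psi>' \<union> \<Psi>k) X) + 1.02 * norm e"
    using estimation_bound[OF rip X U Xt(1), where e = e] Xt(2) by (simp add: b \<delta>_def)
  ultimately have "(1 - \<delta>) * norm (X - Xt) \<le> 2 * (\<delta> * norm D) + 3.06 * norm e"
    using identified by linarith
  moreover have "\<delta> * norm D \<le> 0.04 * norm D"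
    using rip by (intro mult_right_mono) (simp_all add: \<delta>_def)
  moreover have "0.96 * norm (X - Xt) \<le> (1 - \<delta>) * norm (X - Xt)"
    using rip by (intro mult_right_mono) (simp_all add: \<delta>_def)
  ultimately have "norm (X - Xt) \<le> 1/12 * norm D + 51/16 * norm e" by simp
  then show ?thesis using pruning_bound[OF prune X] by (simp add: D_def)
qed

lemma admira_run_contraction:
  assumes rip: "rip_const A (4 * r) \<le> 0.04" and run: "admira_run Ats A b r Xh"
    and b: "b = A X + e" and X: "few_atoms Ats r \<Psi>s" "X \<in> mspan \<Psi>s"
  shows "norm (X - Xh (Suc k)) \<le> 1/6 * norm (X - Xh k) + 51/8 * norm e"
proof -
  obtain \<Psi>h \<Psi>' \<Psi>t Xt where start: "Xh 0 = 0" "\<Psi>h 0 = {}"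
    and step: "\<And>k. best_atoms Ats (2 * r) (adjoint_op A (b - A (Xh k))) (\<Psi>' (Suc k)) \<and>
          \<Psi>t (Suc k) = \<Psi>' (Suc k) \<union> \<Psi>h k \<and>
          Xt (Suc k) \<in> mspan (\<Psi>t (Suc k)) \<and>
          (\<forall>X\<in>mspan (\<Psi>t (Suc k)). norm (b - A (Xt (Suc k))) \<le> norm (b - A X)) \<and>
          best_atoms Ats r (Xt (Suc k)) (\<Psi>h (Suc k)) \<and>
          Xh (Suc k) = proj (\<Psi>h (Suc k)) (Xt (Suc k))"
    using run unfolding admira_run_def by blast
  have estimate: "few_atoms Ats r (\<Psi>h k) \<and> Xh k \<in> mspan (\<Psi>h k)" for k
  proof (cases k)
    case (Suc k')
    then show ?thesis using step[of k'] proj_in_mspan by (auto simp: best_atoms_iff)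
  qed (simp add: start few_atoms_def)
  show ?thesis
    using admira_step_contraction[OF rip b X estimate[THEN conjunct1] estimate[THEN conjunct2]] step[of k]
    by auto
qed

end

section \<open>Existence of a singular value decomposition\<close>

lemma matrix_norm_attained:
  fixes Y :: "complex^'n::finite^'m::finite"
  shows "\<exists>v. norm v = 1 \<and> (\<forall>x. norm (Y *v x) \<le> norm (Y *v v) * norm x)"
proof -
  have "continuous_on (sphere 0 1) (\<lambda>w. norm (Y *v w))"
    using linear_matrix_vector_mult[of Y]
    by (intro continuous_intros linear_continuous_on) (simp add: linear_conv_bounded_linear)
  moreover have "sphere (0::complex^'n) 1 \<noteq> {}" by (simp add: sphere_eq_empty)
  ultimately obtain v where v: "v \<in> sphere 0 1"
    and max: "\<And>y. y \<in> sphere 0 1 \<Longrightarrow> norm (Y *v y) \<le> norm (Y *v v)"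
    using continuous_attains_sup[OF compact_sphere] by blast
  have "norm (Y *v x) \<le> norm (Y *v v) * norm x" for x
  proof (cases "x = 0")
    case False
    have "Y *v ((1 / norm x) *\<^sub>R x) = (1 / norm x) *\<^sub>R (Y *v x)"
      using linear_matrix_vector_mult[of Y] by (simp add: linear_scale)
    then show ?thesis
      using max[of "(1 / norm x) *\<^sub>R x"] False by (simp add: field_simps)
  qed simp
  with v show ?thesis by auto
qed

text \<open>Moving along \<open>w \<bottom> v\<close> away from a maximiser \<open>v\<close> of \<open>\<parallel>Yx\<parallel>/\<parallel>x\<parallel>\<close> increases \<open>\<parallel>Yx\<parallel>\<^sup>2\<close> only to second order.\<close>

lemma inner_images_eq_0_if_maximizer:
  fixes Y :: "complex^'n::finite^'m::finite"
  assumes bound: "\<And>x. norm (Y *v x) \<le> s * norm x" and v: "norm v = 1" "norm (Y *v v) = s"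
    and orth: "inner v w = 0"
  shows "inner (Y *v v) (Y *v w) = 0"
proof (rule linear_le_quadratic_imp_zero[where K = "s\<^sup>2 * (norm w)\<^sup>2"])
  fix t :: real
  have "(norm (Y *v (v + t *\<^sub>R w)))\<^sup>2 \<le> (s * norm (v + t *\<^sub>R w))\<^sup>2"
    using bound[of "v + t *\<^sub>R w"] by (simp add: power_mono)
  moreover have "Y *v (v + t *\<^sub>R w) = Y *v v + t *\<^sub>R (Y *v w)"
    using linear_matrix_vector_mult[of Y] by (simp add: linear_add linear_scale)
  ultimately have "s\<^sup>2 + 2 * t * inner (Y *v v) (Y *v w) + t\<^sup>2 * (norm (Y *v w))\<^sup>2 \<le> s\<^sup>2 + t\<^sup>2 * (s\<^sup>2 * (norm w)\<^sup>2)"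
    using orth v by (simp add: power2_norm_add_inner power_mult_distrib algebra_simps)
  moreover have "t\<^sup>2 * (norm (Y *v w))\<^sup>2 \<ge> 0" by simp
  ultimately show "2 * t * inner (Y *v v) (Y *v w) \<le> t\<^sup>2 * (s\<^sup>2 * (norm w)\<^sup>2)" by linarith
qed simp

definition top_singular_triple :: "complex^'n::finite^'m::finite \<Rightarrow> real \<Rightarrow> complex^'m \<Rightarrow> complex^'n \<Rightarrow> bool" where
  "top_singular_triple Y s u v \<longleftrightarrow> norm v = 1 \<and> norm u = 1 \<and> s > 0 \<and>
     Y *v v = complex_of_real s *s u \<and> (\<forall>x. norm (Y *v x) \<le> s * norm x) \<and>
     (\<forall>w. cinner_vec (Y *v w) u = complex_of_real s * cinner_vec w v)"

lemma top_singular_triple_exists: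
  fixes Y :: "complex^'n::finite^'m::finite"
  assumes "Y \<noteq> 0"
  shows "\<exists>s u v. top_singular_triple Y s u v"
proof -
  obtain v where v: "norm v = 1" and bound: "\<And>x. norm (Y *v x) \<le> norm (Y *v v) * norm x"
    using matrix_norm_attained by blast
  define s where "s = norm (Y *v v)"
  have "s > 0"
  proof (rule ccontr)
    assume "\<not> s > 0"
    then have "Y *v x = 0" for x using bound[of x] by (simp add: s_def)
    then have "Y = 0" by (simp add: matrix_eq)
    with assms show False ..
  qed
  define u where "u = complex_of_real (1 / s) *s (Y *v v)"
  have Yv: "Y *v v = complex_of_real s *s u" using \<open>s > 0\<close> by (simp add: u_def vector_smult_assoc)
  have u: "norm u = 1" using \<open>s > 0\<close> by (simp add: u_def norm_vector_scalar_mult s_def norm_divide)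
  have orth: "cinner_vec (Y *v w) u = 0" if "cinner_vec w v = 0" for w
  proof -
    have "cinner_vec v w = 0" using that cinner_vec_commute[of v w] by simp
    then have "inner v w = 0" "inner v (\<i> *s w) = 0"
      by (simp_all add: inner_eq_Re_cinner_vec cinner_vec_scale_right)
    then have "inner (Y *v v) (Y *v w) = 0" "inner (Y *v v) (Y *v (\<i> *s w)) = 0"
      using inner_images_eq_0_if_maximizer[OF bound v] by (simp_all add: s_def)
    then have "cinner_vec (Y *v v) (Y *v w) = 0"
      by (simp add: matrix_vector_mult_scale inner_eq_Re_cinner_vec cinner_vec_scale_right complex_eq_iff)
    then show ?thesis
      using cinner_vec_commute[of "Y *v w" "Y *v v"] by (simp add: u_def cinner_vec_scale_right)
  qed
  have "cinner_vec (Y *v w) u = complex_of_real s * cinner_vec w v" for w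
  proof -
    define c where "c = cinner_vec w v"
    have "cinner_vec (w - c *s v) v = 0"
      using v by (simp add: cinner_vec_diff_left cinner_vec_scale_left cinner_vec_self c_def)
    moreover have "Y *v w = Y *v (w - c *s v) + c *s (Y *v v)"
      by (simp add: matrix_vector_mult_diff_distrib matrix_vector_mult_scale)
    ultimately show ?thesis
      using u by (simp add: orth cinner_vec_add_left cinner_vec_scale_left Yv cinner_vec_self c_def)
  qed
  then show ?thesis
    using v u \<open>s > 0\<close> Yv bound unfolding top_singular_triple_def s_def by blast
qed

lemma deflation_mult_vec: "(Y - smat s (outer u v)) *v w = Y *v w - (s * cinner_vec w v) *s u"
  by (simp add: matrix_vector_mult_diff_rdistrib smat_mult_vec outer_mult_vec vector_smult_assoc)

lemma
  assumes "top_singular_triple Y s u v"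
  defines "Y' \<equiv> Y - smat (complex_of_real s) (outer u v)"
  shows deflation_kills: "Y' *v v = 0"
    and deflation_orthogonal: "cinner_vec (Y' *v w) u = 0"
    and deflation_norm_le: "norm (Y' *v w) \<le> s * norm w"
proof -
  have v: "norm v = 1" and Yv: "Y *v v = complex_of_real s *s u"
    and bound: "\<And>x. norm (Y *v x) \<le> s * norm x"
    and key: "\<And>w. cinner_vec (Y *v w) u = complex_of_real s * cinner_vec w v" and u: "norm u = 1"
    using assms(1) by (auto simp: top_singular_triple_def)
  show "Y' *v v = 0"
    using v by (simp add: Y'_def deflation_mult_vec Yv cinner_vec_self)
  show "cinner_vec (Y' *v w) u = 0"
    using u by (simp add: Y'_def deflation_mult_vec key cinner_vec_diff_left cinner_vec_scale_left cinner_vec_self)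
  define c where "c = cinner_vec w v"
  have "Y' *v w = Y *v (w - c *s v)"
    by (simp add: Y'_def deflation_mult_vec c_def matrix_vector_mult_diff_distrib
        matrix_vector_mult_scale Yv vector_smult_assoc)
  moreover have "norm (w - c *s v) \<le> norm w"
  proof -
    have "inner (w - c *s v) (c *s v) = 0"
      using v by (simp add: inner_eq_Re_cinner_vec cinner_vec_diff_left cinner_vec_scale_left
          cinner_vec_scale_right cinner_vec_self c_def)
    then have "(norm w)\<^sup>2 = (norm (w - c *s v))\<^sup>2 + (norm (c *s v))\<^sup>2"
      using power2_norm_add_inner[of "w - c *s v" "c *s v"] by simp
    then have "(norm (w - c *s v))\<^sup>2 \<le> (norm w)\<^sup>2" by simp
    then show ?thesis by (simp add: power2_le_iff_abs_le)
  qed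
  ultimately show "norm (Y' *v w) \<le> s * norm w"
    using bound[of "w - c *s v"] assms(1) by (auto simp: top_singular_triple_def intro: order_trans)
qed

definition svd_residual ::
  "('m::finite,'n::finite) cmat \<Rightarrow> nat \<Rightarrow> (nat \<Rightarrow> real) \<Rightarrow> (nat \<Rightarrow> complex^'m) \<Rightarrow> (nat \<Rightarrow> complex^'n) \<Rightarrow> ('m,'n) cmat" where
  "svd_residual X j \<sigma> u v = X - (\<Sum>i<j. smat (complex_of_real (\<sigma> i)) (outer (u i) (v i)))"

definition orthonormal_upto :: "nat \<Rightarrow> (nat \<Rightarrow> complex^'n::finite) \<Rightarrow> bool" where
  "orthonormal_upto j v \<longleftrightarrow> (\<forall>i<j. \<forall>k<j. cinner_vec (v i) (v k) = (if i = k then 1 else 0))"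

text \<open>The first \<open>j\<close> steps of the greedy construction, which repeatedly removes a top singular triple.\<close>

definition partial_svd ::
  "('m::finite,'n::finite) cmat \<Rightarrow> nat \<Rightarrow> (nat \<Rightarrow> real) \<Rightarrow> (nat \<Rightarrow> complex^'m) \<Rightarrow> (nat \<Rightarrow> complex^'n) \<Rightarrow> bool" where
  "partial_svd X j \<sigma> u v \<longleftrightarrow> (\<forall>i<j. \<sigma> i > 0) \<and> (\<forall>i. Suc i < j \<longrightarrow> \<sigma> (Suc i) \<le> \<sigma> i) \<and>
     orthonormal_upto j u \<and> orthonormal_upto j v \<and>
     (\<forall>i<j. svd_residual X j \<sigma> u v *v v i = 0) \<and>
     (\<forall>i<j. \<forall>w. cinner_vec (svd_residual X j \<sigma> u v *v w) (u i) = 0) \<and>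
     (j > 0 \<longrightarrow> (\<forall>w. norm (svd_residual X j \<sigma> u v *v w) \<le> \<sigma> (j - 1) * norm w))"

lemma orthonormal_upto_Suc:
  assumes "orthonormal_upto j v" "norm v0 = 1" "\<And>i. i < j \<Longrightarrow> cinner_vec (v i) v0 = 0"
  shows "orthonormal_upto (Suc j) (v(j := v0))"
proof -
  have "cinner_vec v0 (v i) = 0" if "i < j" for i
    using assms(3)[OF that] cinner_vec_commute[of v0 "v i"] by simp
  then show ?thesis
    using assms cinner_vec_self_eq_1_iff[of v0] by (auto simp: orthonormal_upto_def less_Suc_eq)
qed

lemma svd_residual_Suc:
  "svd_residual X (Suc j) (\<sigma>(j := s)) (u(j := u0)) (v(j := v0)) =
   svd_residual X j \<sigma> u v - smat (complex_of_real s) (outer u0 v0)"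
proof -
  have "(\<Sum>i<j. smat (complex_of_real ((\<sigma>(j := s)) i)) (outer ((u(j := u0)) i) ((v(j := v0)) i))) =
      (\<Sum>i<j. smat (complex_of_real (\<sigma> i)) (outer (u i) (v i)))"
    by (rule sum.cong) auto
  then show ?thesis by (simp add: svd_residual_def algebra_simps)
qed

lemma
  assumes inv: "partial_svd X j \<sigma> u v" and top: "top_singular_triple (svd_residual X j \<sigma> u v) s u0 v0"
  shows top_singular_triple_orthogonal_left: "i < j \<Longrightarrow> cinner_vec (u i) u0 = 0"
    and top_singular_triple_orthogonal_right: "i < j \<Longrightarrow> cinner_vec (v i) v0 = 0"
    and top_singular_value_le: "j > 0 \<Longrightarrow> s \<le> \<sigma> (j - 1)"
proof -
  define Y where "Y = svd_residual X j \<sigma> u v"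
  have s: "s > 0" and u0: "norm u0 = 1" and v0: "norm v0 = 1"
    and Yv0: "Y *v v0 = complex_of_real s *s u0"
    and key: "\<And>w. cinner_vec (Y *v w) u0 = complex_of_real s * cinner_vec w v0"
    using top by (auto simp: top_singular_triple_def Y_def)
  assume "i < j"
  then have "cinner_vec (Y *v v0) (u i) = 0" using inv by (simp add: partial_svd_def Y_def)
  then have "cinner_vec u0 (u i) = 0" using s by (simp add: Yv0 cinner_vec_scale_left)
  then show "cinner_vec (u i) u0 = 0" using cinner_vec_commute[of "u i" u0] by simp
  show "cinner_vec (v i) v0 = 0"
    using key[of "v i"] inv \<open>i < j\<close> s by (simp add: partial_svd_def Y_def)
next
  define Y where "Y = svd_residual X j \<sigma> u v"
  assume "j > 0"
  then have "norm (Y *v w) \<le> \<sigma> (j - 1) * norm w" for w using inv by (simp add: partial_svd_def Y_def)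
  moreover have "norm (Y *v v0) = s" "norm v0 = 1"
    using top by (auto simp: top_singular_triple_def Y_def norm_vector_scalar_mult)
  ultimately show "s \<le> \<sigma> (j - 1)" by (metis mult.right_neutral)
qed

lemma partial_svd_Suc:
  assumes inv: "partial_svd X j \<sigma> u v" and top: "top_singular_triple (svd_residual X j \<sigma> u v) s u0 v0"
  shows "partial_svd X (Suc j) (\<sigma>(j := s)) (u(j := u0)) (v(j := v0))"
proof -
  define Y where "Y = svd_residual X j \<sigma> u v"
  define Y' where "Y' = Y - smat (complex_of_real s) (outer u0 v0)"
  have s: "s > 0" and u0: "norm u0 = 1" and v0: "norm v0 = 1"
    using top by (auto simp: top_singular_triple_def)
  have I: "\<forall>i<j. \<sigma> i > 0" "\<forall>i. Suc i < j \<longrightarrow> \<sigma> (Suc i) \<le> \<sigma> i" "orthonormal_upto j u"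
      "orthonormal_upto j v" "\<forall>i<j. Y *v v i = 0" "\<forall>i<j. \<forall>w. cinner_vec (Y *v w) (u i) = 0"
    using inv unfolding partial_svd_def Y_def by blast+
  note ou = top_singular_triple_orthogonal_left[OF inv top]
    and vo = top_singular_triple_orthogonal_right[OF inv top]
  note top' = top[folded Y_def]
  show ?thesis
    unfolding partial_svd_def svd_residual_Suc Y_def[symmetric] Y'_def[symmetric]
  proof (intro conjI allI impI)
    show "(\<sigma>(j := s)) i > 0" if "i < Suc j" for i using that I(1) s by (auto simp: less_Suc_eq)
    show "(\<sigma>(j := s)) (Suc i) \<le> (\<sigma>(j := s)) i" if "Suc i < Suc j" for i
      using that I(2) top_singular_value_le[OF inv top] by (cases "Suc i = j") auto
    show "orthonormal_upto (Suc j) (u(j := u0))" using ou by (intro orthonormal_upto_Suc[OF I(3) u0])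
    show "orthonormal_upto (Suc j) (v(j := v0))" using vo by (intro orthonormal_upto_Suc[OF I(4) v0])
    show "Y' *v (v(j := v0)) i = 0" if "i < Suc j" for i
      using that I(5) vo deflation_kills[OF top']
      by (auto simp: Y'_def deflation_mult_vec less_Suc_eq)
    show "cinner_vec (Y' *v w) ((u(j := u0)) i) = 0" if "i < Suc j" for i w
      using that I(6) ou deflation_orthogonal[OF top'] cinner_vec_commute[of u0 "u i"]
      by (auto simp: Y'_def deflation_mult_vec less_Suc_eq cinner_vec_diff_left cinner_vec_scale_left)
    show "norm (Y' *v w) \<le> (\<sigma>(j := s)) (Suc j - 1) * norm w" for w
      using deflation_norm_le[OF top'] by (simp add: Y'_def)
  qed
qed

lemma orthonormal_upto_length_le:
  assumes "orthonormal_upto j (v :: nat \<Rightarrow> complex^'n::finite)"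
  shows "j \<le> DIM(complex^'n)"
proof -
  have inj: "inj_on v {..<j}"
    using assms by (intro inj_onI) (metis lessThan_iff one_neq_zero orthonormal_upto_def)
  have "pairwise orthogonal (v ` {..<j})"
    using assms by (auto simp: pairwise_def orthogonal_def inner_eq_Re_cinner_vec orthonormal_upto_def)
  moreover have "0 \<notin> v ` {..<j}" using assms by (force simp: orthonormal_upto_def)
  ultimately have "independent (v ` {..<j})" using pairwise_orthogonal_independent by blast
  then have "card (v ` {..<j}) \<le> DIM(complex^'n)" using independent_bound by blast
  then show ?thesis using card_image[OF inj] by simp
qed

lemma svd_exists_sorted:
  fixes X :: "('m::finite,'n::finite) cmat"
  shows "\<exists>K \<sigma> u v. svd_decomp X K \<sigma> u v \<and> (\<forall>i. Suc i < K \<longrightarrow> \<sigma> (Suc i) \<le> \<sigma> i)"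
proof -
  have "partial_svd X j \<sigma> u v \<Longrightarrow> \<exists>K \<sigma> u v. svd_decomp X K \<sigma> u v \<and> (\<forall>i. Suc i < K \<longrightarrow> \<sigma> (Suc i) \<le> \<sigma> i)"
    for j \<sigma> u v
  proof (induction "DIM(complex^'n) - j" arbitrary: j \<sigma> u v rule: less_induct)
    case less
    show ?case
    proof (cases "svd_residual X j \<sigma> u v = 0")
      case True
      then have "svd_decomp X j \<sigma> u v"
        using less.prems by (simp add: svd_decomp_def partial_svd_def orthonormal_upto_def svd_residual_def)
      then show ?thesis using less.prems by (auto simp: partial_svd_def)
    next
      case False
      then obtain s u0 v0 where "top_singular_triple (svd_residual X j \<sigma> u v) s u0 v0"
        using top_singular_triple_exists by blast
      with less.prems have succ: "partial_svd X (Suc j) (\<sigma>(j := s)) (u(j := u0)) (v(j := v0))"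
        by (rule partial_svd_Suc)
      then have "Suc j \<le> DIM(complex^'n)"
        by (intro orthonormal_upto_length_le[of _ "v(j := v0)"]) (simp add: partial_svd_def)
      then show ?thesis using less.hyps[OF _ succ] by simp
    qed
  qed
  moreover have "partial_svd X 0 (\<lambda>_. 0) (\<lambda>_. 0) (\<lambda>_. 0)"
    by (simp add: partial_svd_def orthonormal_upto_def)
  ultimately show ?thesis by blast
qed

section \<open>The nuclear norm\<close>

lemma svd_decomp_orthonormal:
  assumes "svd_decomp X K \<sigma> u v"
  shows "orthonormal_upto K u" "orthonormal_upto K v"
  using assms by (simp_all add: svd_decomp_def orthonormal_upto_def)

lemma svd_decomp_pos: "svd_decomp X K \<sigma> u v \<Longrightarrow> k < K \<Longrightarrow> \<sigma> k > 0"
  by (simp add: svd_decomp_def)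

lemma orthonormal_upto_norm: "orthonormal_upto K v \<Longrightarrow> k < K \<Longrightarrow> norm (v k) = 1"
  by (simp add: orthonormal_upto_def flip: cinner_vec_self_eq_1_iff)

lemma svd_cinner:
  assumes "svd_decomp X K \<sigma> u v"
  shows "cinner_vec (X *v w) z = (\<Sum>i<K. complex_of_real (\<sigma> i) * cinner_vec w (v i) * cinner_vec (u i) z)"
proof -
  have "X *v w = (\<Sum>i<K. (complex_of_real (\<sigma> i) * cinner_vec w (v i)) *s u i)"
    using assms by (simp add: svd_decomp_def sum_mult_vec smat_mult_vec outer_mult_vec vector_smult_assoc)
  then show ?thesis by (simp add: cinner_vec_sum_left cinner_vec_scale_left)
qed

lemma svd_cinner_singular_vectors:
  assumes d: "svd_decomp X K \<sigma> u v" and k: "k < K"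
  shows "cinner_vec (X *v v k) (u k) = complex_of_real (\<sigma> k)"
proof -
  have "cinner_vec (X *v v k) (u k) = (\<Sum>i<K. if i = k then complex_of_real (\<sigma> i) else 0)"
    unfolding svd_cinner[OF d] using svd_decomp_orthonormal[OF d] k
    by (intro sum.cong) (auto simp: orthonormal_upto_def)
  also have "\<dots> = complex_of_real (\<sigma> k)" using k by simp
  finally show ?thesis .
qed

lemma bessel_inequality:
  assumes on: "orthonormal_upto K v"
  shows "(\<Sum>k<K. (cmod (cinner_vec y (v k)))\<^sup>2) \<le> (norm y)\<^sup>2"
proof -
  define c where "c k = cinner_vec y (v k)" for k
  define p where "p = (\<Sum>k<K. c k *s v k)"
  define S where "S = (\<Sum>k<K. c k * cnj (c k))"
  have yp: "cinner_vec y p = S"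
    by (simp add: p_def S_def cinner_vec_sum_right cinner_vec_scale_right c_def[symmetric] mult.commute)
  have "cinner_vec (v k) p = cnj (c k)" if "k < K" for k
  proof -
    have "cinner_vec (v k) p = (\<Sum>l<K. if l = k then cnj (c l) else 0)"
      unfolding p_def cinner_vec_sum_right cinner_vec_scale_right
      using on that by (intro sum.cong) (auto simp: orthonormal_upto_def)
    also have "\<dots> = cnj (c k)" using that by simp
    finally show ?thesis .
  qed
  then have pp: "cinner_vec p p = S"
    unfolding S_def by (subst (1) p_def) (simp add: cinner_vec_sum_left cinner_vec_scale_left)
  have py: "cinner_vec p y = S"
    using yp cinner_vec_commute[of p y] by (simp add: S_def cnj_sum mult.commute)
  have ReS: "Re S = (\<Sum>k<K. (cmod (c k))\<^sup>2)"
    by (simp add: S_def Re_sum complex_norm_square[symmetric] del: of_real_power)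
  have "0 \<le> (norm (y - p))\<^sup>2" by simp
  also have "(norm (y - p))\<^sup>2 = Re (cinner_vec (y - p) (y - p))" by (simp add: cinner_vec_self)
  also have "\<dots> = Re (cinner_vec y y - S)"
    by (simp add: cinner_vec_diff_left cinner_vec_diff_right yp pp py)
  also have "\<dots> = (norm y)\<^sup>2 - (\<Sum>k<K. (cmod (c k))\<^sup>2)" by (simp add: cinner_vec_self ReS)
  finally show ?thesis by (simp add: c_def)
qed

lemma sum_cinner_products_le_1:
  assumes "orthonormal_upto K u" "orthonormal_upto K v" "norm x = 1" "norm y = 1"
  shows "(\<Sum>k<K. cmod (cinner_vec y (v k)) * cmod (cinner_vec x (u k))) \<le> 1"
proof -
  have "(\<Sum>k<K. cmod (cinner_vec y (v k)) * cmod (cinner_vec x (u k)))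
      \<le> (\<Sum>k<K. ((cmod (cinner_vec y (v k)))\<^sup>2 + (cmod (cinner_vec x (u k)))\<^sup>2) / 2)"
  proof (rule sum_mono)
    fix k
    show "cmod (cinner_vec y (v k)) * cmod (cinner_vec x (u k))
        \<le> ((cmod (cinner_vec y (v k)))\<^sup>2 + (cmod (cinner_vec x (u k)))\<^sup>2) / 2"
      using sum_squares_bound[of "cmod (cinner_vec y (v k))" "cmod (cinner_vec x (u k))"]
      by (simp add: field_simps)
  qed
  also have "\<dots> = ((\<Sum>k<K. (cmod (cinner_vec y (v k)))\<^sup>2) + (\<Sum>k<K. (cmod (cinner_vec x (u k)))\<^sup>2)) / 2"
    by (simp add: sum_divide_distrib sum.distrib add_divide_distrib)
  also have "\<dots> \<le> ((norm y)\<^sup>2 + (norm x)\<^sup>2) / 2"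
    using bessel_inequality[OF assms(2), of y] bessel_inequality[OF assms(1), of x] by simp
  finally show ?thesis using assms(3,4) by simp
qed

text \<open>
Expanding \<open>\<sigma>\<^sub>k = \<langle>X v\<^sub>k, u\<^sub>k\<rangle>\<close> in a second decomposition \<open>\<Sum>\<^sub>l \<tau>\<^sub>l x\<^sub>l y\<^sub>l\<^sup>H\<close> and summing over \<open>k\<close>
bounds \<open>\<Sum>\<^sub>k \<sigma>\<^sub>k\<close> by \<open>\<Sum>\<^sub>l \<tau>\<^sub>l\<close>; by symmetry the two sums agree, so the nuclear norm is well defined.
\<close>

lemma sum_singular_values_le:
  assumes d1: "svd_decomp X K \<sigma> u v" and d2: "svd_decomp X L \<tau> x y"
  shows "(\<Sum>k<K. \<sigma> k) \<le> (\<Sum>l<L. \<tau> l)"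
proof -
  define a where "a k l = cmod (cinner_vec (y l) (v k)) * cmod (cinner_vec (x l) (u k))" for k l
  have "\<sigma> k \<le> (\<Sum>l<L. \<tau> l * a k l)" if k: "k < K" for k
  proof -
    have "complex_of_real (\<sigma> k) =
        (\<Sum>l<L. complex_of_real (\<tau> l) * cinner_vec (v k) (y l) * cinner_vec (x l) (u k))"
      using svd_cinner_singular_vectors[OF d1 k] svd_cinner[OF d2] by simp
    then have "\<sigma> k = cmod (\<Sum>l<L. complex_of_real (\<tau> l) * cinner_vec (v k) (y l) * cinner_vec (x l) (u k))"
      using svd_decomp_pos[OF d1 k] by (metis abs_of_pos norm_of_real)
    also have "\<dots> \<le> (\<Sum>l<L. cmod (complex_of_real (\<tau> l) * cinner_vec (v k) (y l) * cinner_vec (x l) (u k)))"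
      by (rule norm_sum)
    also have "\<dots> = (\<Sum>l<L. \<tau> l * a k l)"
      using svd_decomp_pos[OF d2] cinner_vec_commute[of "v k" "y _"]
      by (intro sum.cong) (simp_all add: norm_mult a_def less_imp_le)
    finally show ?thesis .
  qed
  then have "(\<Sum>k<K. \<sigma> k) \<le> (\<Sum>k<K. \<Sum>l<L. \<tau> l * a k l)" by (intro sum_mono) simp
  also have "\<dots> = (\<Sum>l<L. \<tau> l * (\<Sum>k<K. a k l))"
    by (subst sum.swap) (simp add: sum_distrib_left)
  also have "\<dots> \<le> (\<Sum>l<L. \<tau> l * 1)"
    using svd_decomp_pos[OF d2] svd_decomp_orthonormal[OF d1] svd_decomp_orthonormal[OF d2]
    by (intro sum_mono mult_left_mono)
      (simp_all add: a_def sum_cinner_products_le_1 orthonormal_upto_norm less_imp_le)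
  finally show ?thesis by simp
qed

lemma nuclear_norm_eq:
  assumes "svd_decomp X K \<sigma> u v"
  shows "nuclear_norm X = (\<Sum>k<K. \<sigma> k)"
  unfolding nuclear_norm_def
proof (rule the_equality)
  fix s assume "\<exists>K' \<sigma>' u' v'. svd_decomp X K' \<sigma>' u' v' \<and> s = (\<Sum>k<K'. \<sigma>' k)"
  then obtain K' \<sigma>' u' v' where "svd_decomp X K' \<sigma>' u' v'" "s = (\<Sum>k<K'. \<sigma>' k)" by blast
  then show "s = (\<Sum>k<K. \<sigma> k)"
    using sum_singular_values_le[OF assms] sum_singular_values_le[OF _ assms] by fastforce
qed (use assms in blast)

lemma nuclear_norm_nonneg: "nuclear_norm X \<ge> 0"
proof -
  obtain K \<sigma> u v where d: "svd_decomp X K \<sigma> u v" using svd_exists_sorted by blast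
  then show ?thesis
    unfolding nuclear_norm_eq[OF d] by (intro sum_nonneg) (simp add: svd_decomp_pos less_imp_le)
qed

definition index_block :: "nat \<Rightarrow> nat \<Rightarrow> nat \<Rightarrow> nat set" where
  "index_block r K j = {k. k < K \<and> k div r = j}"

lemma index_block_subset:
  assumes "r > 0"
  shows "index_block r K j \<subseteq> {j * r..<j * r + r}"
proof
  fix k assume "k \<in> index_block r K j"
  then have "k div r = j" by (simp add: index_block_def)
  then show "k \<in> {j * r..<j * r + r}"
    using div_times_less_eq_dividend[of k r] dividend_less_div_times[OF assms, of k] by (auto simp: mult.commute)
qed

lemma card_index_block_le: "r > 0 \<Longrightarrow> card (index_block r K j) \<le> r"
  using card_mono[OF _ index_block_subset] by fastforce

lemma index_block_full:
  assumes "r > 0" "index_block r K (Suc j) \<noteq> {}"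
  shows "index_block r K j = {j * r..<j * r + r}"
proof
  obtain k where "k < K" "k div r = Suc j" using assms(2) by (auto simp: index_block_def)
  then have "j * r + r \<le> K" using div_times_less_eq_dividend[of k r] by simp
  moreover have "l div r = j" if "l \<in> {j * r..<j * r + r}" for l
    using that by (intro div_nat_eqI) (auto simp: mult.commute)
  ultimately show "{j * r..<j * r + r} \<subseteq> index_block r K j"
    by (auto simp: index_block_def)
qed (rule index_block_subset[OF assms(1)])

text \<open>
For nonincreasing \<open>\<sigma>\<close>, every entry of a block of \<open>r\<close> consecutive indices is at most the mean of the
previous (full) block.
\<close>

lemma sum_squares_next_block_le:
  fixes \<sigma> :: "nat \<Rightarrow> real"
  assumes r: "r > 0" and sorted: "\<forall>i. Suc i < K \<longrightarrow> \<sigma> (Suc i) \<le> \<sigma> i" and pos: "\<forall>k<K. \<sigma> k \<ge> 0"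
  shows "(\<Sum>k\<in>index_block r K (Suc j). (\<sigma> k)\<^sup>2) \<le> ((\<Sum>k\<in>index_block r K j. \<sigma> k) / sqrt r)\<^sup>2"
proof (cases "index_block r K (Suc j) = {}")
  case False
  define S where "S = (\<Sum>k\<in>index_block r K j. \<sigma> k)"
  have full: "index_block r K j = {j * r..<j * r + r}" by (rule index_block_full[OF r False])
  have le: "\<sigma> k \<le> \<sigma> l" if k: "k \<in> index_block r K (Suc j)" and l: "l \<in> index_block r K j" for k l
  proof -
    have "l < j * r + r" using l full by auto
    moreover have "Suc j * r \<le> k" using k div_times_less_eq_dividend[of k r] by (simp add: index_block_def)
    ultimately have "l \<le> k" by simp
    moreover have "{l..<k} \<subseteq> {i. Suc i < K}" using k by (auto simp: index_block_def)
    ultimately show ?thesis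
      using lift_Suc_antimono_le_ivl[of "{i. Suc i < K}" \<sigma> l k] sorted by blast
  qed
  have bound: "\<sigma> k \<le> S / r" if k: "k \<in> index_block r K (Suc j)" for k
  proof -
    have "of_nat (card (index_block r K j)) * \<sigma> k \<le> S"
      unfolding S_def by (rule sum_bounded_below) (rule le[OF k])
    then show ?thesis using r full by (simp add: field_simps)
  qed
  have "(\<Sum>k\<in>index_block r K (Suc j). (\<sigma> k)\<^sup>2) \<le> of_nat (card (index_block r K (Suc j))) * (S / r)\<^sup>2"
  proof (rule sum_bounded_above)
    fix k assume k: "k \<in> index_block r K (Suc j)"
    then have "\<sigma> k \<ge> 0" using pos by (simp add: index_block_def)
    then show "(\<sigma> k)\<^sup>2 \<le> (S / r)\<^sup>2" using bound[OF k] by (rule power_mono[rotated])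
  qed
  also have "\<dots> \<le> r * (S / r)\<^sup>2"
    using card_index_block_le[OF r] by (intro mult_right_mono) auto
  also have "\<dots> = (S / sqrt r)\<^sup>2" using r by (simp add: power_divide power2_eq_square)
  finally show ?thesis by (simp add: S_def)
qed simp

lemma rank_sum_outer_le_card:
  fixes u :: "nat \<Rightarrow> complex^'m::finite" and v :: "nat \<Rightarrow> complex^'n::finite"
  assumes "finite I"
  shows "rank (\<Sum>k\<in>I. smat (c k) (outer (u k) (v k))) \<le> card I"
proof -
  define w where "w k = (\<chi> i. cnj (v k $ i))" for k
  have "rank (\<Sum>k\<in>I. smat (c k) (outer (u k) (v k))) \<le> card (w ` I)"
  proof (rule rank_le_card_if_rows_in_span)
    fix i
    have "(\<Sum>k\<in>I. smat (c k) (outer (u k) (v k))) $ i = (\<Sum>k\<in>I. (c k * u k $ i) *s w k)"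
      by (simp add: sum_component row_smat vec_eq_iff outer_def w_def mult_ac)
    also have "\<dots> \<in> vec.span (w ` I)"
      by (intro vec.span_sum vec.span_scale vec.span_base) auto
    finally show "(\<Sum>k\<in>I. smat (c k) (outer (u k) (v k))) $ i \<in> vec.span (w ` I)" .
  qed (use assms in simp)
  also have "\<dots> \<le> card I" using assms by (rule card_image_le)
  finally show ?thesis .
qed

lemma inner_smat_outer:
  "inner (smat (complex_of_real a) (outer u v)) (smat (complex_of_real b) (outer u' v')) =
   Re (complex_of_real (a * b) * cinner_vec u u' * cinner_vec v' v)"
  by (simp add: inner_eq_Re_cinner_mat cinner_mat_smat_left cinner_mat_smat_right cinner_mat_outer mult_ac)

lemma norm_svd_partial_sum:
  assumes d: "svd_decomp Y K \<sigma> u v" and I: "I \<subseteq> {..<K}"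
  shows "(norm (\<Sum>k\<in>I. smat (complex_of_real (\<sigma> k)) (outer (u k) (v k))))\<^sup>2 = (\<Sum>k\<in>I. (\<sigma> k)\<^sup>2)"
proof -
  define T where "T k = smat (complex_of_real (\<sigma> k)) (outer (u k) (v k))" for k
  have "inner (T k) (T l) = (if k = l then (\<sigma> k)\<^sup>2 else 0)" if "k \<in> I" "l \<in> I" for k l
    using that I svd_decomp_orthonormal[OF d]
    by (auto simp: T_def inner_smat_outer orthonormal_upto_def power2_eq_square subset_iff)
  moreover have "finite I" using I finite_subset by blast
  ultimately have "(\<Sum>k\<in>I. \<Sum>l\<in>I. inner (T k) (T l)) = (\<Sum>k\<in>I. (\<sigma> k)\<^sup>2)" by simp
  moreover have "(norm (\<Sum>k\<in>I. T k))\<^sup>2 = (\<Sum>k\<in>I. \<Sum>l\<in>I. inner (T k) (T l))"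
    by (simp add: power2_norm_eq_inner inner_sum_left inner_sum_right) (rule sum.swap)
  ultimately show ?thesis by (simp add: T_def)
qed

lemma sum_index_blocks: "(\<Sum>j<Suc (K div r). \<Sum>k\<in>index_block r K j. f k) = (\<Sum>k<K. f k)"
proof -
  have "(\<lambda>k. k div r) ` {..<K} \<subseteq> {..<Suc (K div r)}" by (auto simp: div_le_mono le_imp_less_Suc)
  from sum.group[OF finite_lessThan finite_lessThan this, of f] show ?thesis
    by (simp add: index_block_def)
qed

lemma norm_svd_block_le:
  assumes d: "svd_decomp Y K \<sigma> u v" and sorted: "\<forall>i. Suc i < K \<longrightarrow> \<sigma> (Suc i) \<le> \<sigma> i" and r: "r > 0"
  shows "norm (\<Sum>k\<in>index_block r K (Suc j). smat (complex_of_real (\<sigma> k)) (outer (u k) (v k)))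
           \<le> (\<Sum>k\<in>index_block r K j. \<sigma> k) / sqrt r"
proof -
  have pos: "\<forall>k<K. \<sigma> k \<ge> 0" using svd_decomp_pos[OF d] by (simp add: less_imp_le)
  have B: "index_block r K j' \<subseteq> {..<K}" for j' by (auto simp: index_block_def)
  have "(\<Sum>k\<in>index_block r K j. \<sigma> k) \<ge> 0" using pos B by (auto simp: subset_iff intro!: sum_nonneg)
  moreover have "(norm (\<Sum>k\<in>index_block r K (Suc j). smat (complex_of_real (\<sigma> k)) (outer (u k) (v k))))\<^sup>2
      \<le> ((\<Sum>k\<in>index_block r K j. \<sigma> k) / sqrt r)\<^sup>2"
    using sum_squares_next_block_le[OF r sorted pos, of j] by (simp add: norm_svd_partial_sum[OF d B])
  ultimately show ?thesis by (simp add: power2_le_iff_abs_le)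
qed

lemma norm_le_nuclear_norm_bound:
  fixes A :: "('m::finite,'n::finite) cmat \<Rightarrow> complex^'p::finite" and Y :: "('m,'n) cmat"
  assumes la: "linear A" and r: "r > 0" and \<gamma>: "\<gamma> \<ge> 0"
    and hyp: "\<And>Z. rank Z \<le> r \<Longrightarrow> norm (A Z) \<le> \<gamma> * norm Z"
  shows "norm (A Y) \<le> \<gamma> * (norm Y + nuclear_norm Y / sqrt r)"
proof -
  obtain K \<sigma> u v where d: "svd_decomp Y K \<sigma> u v" and sorted: "\<forall>i. Suc i < K \<longrightarrow> \<sigma> (Suc i) \<le> \<sigma> i"
    using svd_exists_sorted by blast
  define Yb where "Yb j = (\<Sum>k\<in>index_block r K j. smat (complex_of_real (\<sigma> k)) (outer (u k) (v k)))" for j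
  define S where "S j = (\<Sum>k\<in>index_block r K j. \<sigma> k)" for j
  have fin: "finite (index_block r K j)" for j by (simp add: index_block_def)
  have "Y = (\<Sum>j<Suc (K div r). Yb j)"
    unfolding Yb_def sum_index_blocks using d by (simp add: svd_decomp_def)
  then have "A Y = (\<Sum>j<Suc (K div r). A (Yb j))" using la by (simp only: linear_sum)
  then have "norm (A Y) \<le> (\<Sum>j<Suc (K div r). norm (A (Yb j)))" by (metis norm_sum)
  also have "\<dots> \<le> (\<Sum>j<Suc (K div r). \<gamma> * norm (Yb j))"
  proof (intro sum_mono hyp)
    fix j
    have "rank (Yb j) \<le> card (index_block r K j)" unfolding Yb_def by (rule rank_sum_outer_le_card[OF fin])
    also have "\<dots> \<le> r" by (rule card_index_block_le[OF r])
    finally show "rank (Yb j) \<le> r" .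
  qed
  also have "\<dots> = \<gamma> * (norm (Yb 0) + (\<Sum>j<K div r. norm (Yb (Suc j))))"
    unfolding sum.lessThan_Suc_shift by (simp add: distrib_left sum_distrib_left)
  also have "\<dots> \<le> \<gamma> * (norm Y + (\<Sum>j<Suc (K div r). S j) / sqrt r)"
  proof (intro mult_left_mono[OF _ \<gamma>] add_mono)
    have B0: "index_block r K 0 \<subseteq> {..<K}" by (auto simp: index_block_def)
    have "(norm (Yb 0))\<^sup>2 = (\<Sum>k\<in>index_block r K 0. (\<sigma> k)\<^sup>2)"
      unfolding Yb_def by (rule norm_svd_partial_sum[OF d B0])
    also have "\<dots> \<le> (\<Sum>k<K. (\<sigma> k)\<^sup>2)" using B0 by (intro sum_mono2) auto
    also have "\<dots> = (norm Y)\<^sup>2" using norm_svd_partial_sum[OF d, of "{..<K}"] d by (simp add: svd_decomp_def)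
    finally show "norm (Yb 0) \<le> norm Y" by (simp add: power2_le_iff_abs_le)
    have "(\<Sum>j<K div r. norm (Yb (Suc j))) \<le> (\<Sum>j<K div r. S j / sqrt r)"
      unfolding Yb_def S_def by (intro sum_mono norm_svd_block_le[OF d sorted r])
    also have "\<dots> = (\<Sum>j<K div r. S j) / sqrt r" by (simp add: sum_divide_distrib)
    also have "\<dots> \<le> (\<Sum>j<Suc (K div r). S j) / sqrt r"
      using svd_decomp_pos[OF d] by (intro divide_right_mono)
        (auto simp: S_def index_block_def less_imp_le intro!: sum_nonneg)
    finally show "(\<Sum>j<K div r. norm (Yb (Suc j))) \<le> (\<Sum>j<Suc (K div r). S j) / sqrt r" .
  qed
  also have "(\<Sum>j<Suc (K div r). S j) = nuclear_norm Y"
    unfolding S_def sum_index_blocks by (rule nuclear_norm_eq[OF d, symmetric])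
  finally show ?thesis .
qed

lemma norm_le_nuclear_norm_if_rip_const_le:
  assumes lin: "clinear_op A" and rip: "rip_const A (4 * r) \<le> 0.04" and r: "r > 0"
  shows "norm (A Y) \<le> 1.02 * (norm Y + nuclear_norm Y / sqrt r)"
  using r norm_le_if_rip_const_le[OF lin rip]
  by (intro norm_le_nuclear_norm_bound[OF clinear_op_imp_linear[OF lin]]) auto

section \<open>Convergence of ADMiRA\<close>

lemma halving_recursion_bound:
  fixes a :: "nat \<Rightarrow> real"
  assumes step: "\<And>k. a (Suc k) \<le> 0.5 * a k + c" and "c \<ge> 0"
  shows "a k \<le> (1/2)^k * a 0 + 2 * c"
proof (induction k)
  case (Suc k)
  have "0.5 * a k \<le> 0.5 * ((1/2)^k * a 0 + 2 * c)" using Suc by simp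
  then have "a (Suc k) \<le> 0.5 * ((1/2)^k * a 0 + 2 * c) + c" using step[of k] by linarith
  then show ?case by (simp add: field_simps)
qed (use assms(2) in simp)

lemma contraction_transfer:
  fixes X0 X Xk Xk' :: "'a::real_normed_vector"
  assumes "norm (X - Xk') \<le> 1/6 * norm (X - Xk) + 51/8 * \<epsilon>"
    and "\<epsilon> \<le> 51/50 * norm (X0 - X) + 51/50 * \<eta> + \<mu>" and "\<eta> \<ge> 0" and "\<mu> \<ge> 0"
  shows "norm (X0 - Xk') \<le> 0.5 * norm (X0 - Xk) + 8 * (norm (X0 - X) + \<eta> + \<mu>)"
proof -
  have "norm (X0 - Xk') \<le> norm (X0 - X) + norm (X - Xk')"
    using norm_triangle_ineq[of "X0 - X" "X - Xk'"] by simp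
  moreover have "norm (X - Xk) \<le> norm (X0 - X) + norm (X0 - Xk)"
    using norm_triangle_ineq[of "X - X0" "X0 - Xk"] by (simp add: norm_minus_commute)
  ultimately have "norm (X0 - Xk') \<le> 1/2 * norm (X0 - Xk) + 8 * norm (X0 - X) + 8 * \<eta> + 8 * \<mu>"
    using assms norm_ge_zero[of "X0 - X"] norm_ge_zero[of "X0 - Xk"] by linarith
  then show ?thesis by simp
qed

theorem theorem1:
  fixes Ats :: "(complex^'n^'m) set"
    and A :: "complex^'n^'m \<Rightarrow> complex^'p"
    and X0 X0r :: "complex^'n^'m"
    and \<nu> b :: "complex^'p"
    and r :: nat
    and Xh :: "nat \<Rightarrow> complex^'n^'m"
  assumes r_pos: "r > 0"
    and lin: "clinear_op A"
    and rip: "rip_const A (4 * r) \<le> 0.04"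
    and b_def: "b = A X0 + \<nu>"
    and atoms: "atom_set Ats"
    and run: "admira_run Ats A b r Xh"
    and X0r_rank: "rank X0r \<le> r"
    and X0r_best: "\<forall>Y :: complex^'n^'m. rank Y \<le> r \<longrightarrow> norm (X0 - X0r) \<le> norm (X0 - Y)"
  shows "(\<forall>k. norm (X0 - Xh (Suc k)) \<le> 0.5 * norm (X0 - Xh k)
              + 8 * (norm (X0 - X0r) + nuclear_norm (X0 - X0r) / sqrt (real r) + norm \<nu>))
       \<and> (\<forall>k. norm (X0 - Xh k) \<le> (1/2)^k * norm X0
              + 16 * (norm (X0 - X0r) + nuclear_norm (X0 - X0r) / sqrt (real r) + norm \<nu>))"
proof -
  define \<eta> where "\<eta> = nuclear_norm (X0 - X0r) / sqrt (real r)"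
  define e where "e = A (X0 - X0r) + \<nu>"
  obtain \<Psi>s where \<Psi>s: "few_atoms Ats r \<Psi>s" "X0r \<in> mspan \<Psi>s"
    using mspan_few_atoms_if_rank_le[OF atoms X0r_rank] by blast
  have b: "b = A X0r + e"
    using clinear_op_imp_linear[OF lin] by (simp add: b_def e_def linear_diff)
  have noise: "norm e \<le> 51/50 * norm (X0 - X0r) + 51/50 * \<eta> + norm \<nu>"
    using norm_le_nuclear_norm_if_rip_const_le[OF lin rip r_pos, of "X0 - X0r"]
      norm_triangle_ineq[of "A (X0 - X0r)" \<nu>]
    by (simp add: e_def \<eta>_def)
  have \<eta>: "\<eta> \<ge> 0" by (simp add: \<eta>_def nuclear_norm_nonneg)
  have step: "norm (X0 - Xh (Suc k)) \<le> 0.5 * norm (X0 - Xh k) + 8 * (norm (X0 - X0r) + \<eta> + norm \<nu>)" for k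
    by (rule contraction_transfer[OF admira_run_contraction[OF lin atoms rip run b \<Psi>s] noise \<eta> norm_ge_zero])
  moreover have "Xh 0 = 0" using run by (auto simp: admira_run_def)
  ultimately show ?thesis
    using halving_recursion_bound[of "\<lambda>k. norm (X0 - Xh k)", OF step] \<eta> unfolding \<eta>_def by simp
qed

end
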